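(* For all integers $n\ge4$ and $1\le f\le n$, $\mathcal{C}(n,f)\neq\emptyset$; that is, there exists a transitive circle exchange transformation of $n$ subintervals with exactly $f$ flips.
   Context: Let $S^1=[0,1]/(0\sim1)$ with orientation induced by $[0,1]$. An $n$-CET is an injective map $T:\bigcup_{i=1}^n I_i\to S^1$, where $I_1,\dots,I_n$ are pairwise disjoint open subintervals of $S^1$ whose closures cover $S^1$, which is an isometry on each $I_i$ and cannot be continuously extended to a larger open subset of $S^1$. A flip is an $I_i$ on which $T$ reverses orientation. $T$ is transitive if some orbit $\{T^m(p): m\in\mathbb{Z},\ p\in\mathrm{Dom}(T^m)\}$ is dense in $S^1$. $\mathcal{C}(n,f)$ is the set of transitive $n$-CETs with exactly $f$ flips. *)

theory Defs
  imports "HOL-Analysis.Analysis"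
begin

text \<open>The circle S^1 = [0,1]/(0~1) is realised as the unit circle in the complex plane,
  via t \<mapsto> cis (2 pi t); the orientation induced by [0,1] is the counterclockwise one.
  The metric is the restriction of the Euclidean metric (the chordal metric), which is a
  strictly increasing function of the arc-length metric, so it has the same isometries.\<close>

definition S1 :: "complex set" where
  "S1 = sphere 0 1"

definition circ :: "real \<Rightarrow> complex" where
  "circ t = cis (2 * pi * t)"

definition open_arc :: "complex set \<Rightarrow> bool" where
  "open_arc I \<longleftrightarrow> (\<exists>a b. a < b \<and> b \<le> a + 1 \<and> I = circ ` {a<..<b})"

definition isometry_on :: "complex set \<Rightarrow> (complex \<Rightarrow> complex) \<Rightarrow> bool" where
  "isometry_on I T \<longleftrightarrow> (\<forall>x\<in>I. \<forall>y\<in>I. dist (T x) (T y) = dist x y)"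

text \<open>An isometry of an arc into the circle reverses orientation iff it agrees on the arc
  with an orientation-reversing isometry of the circle, i.e. a reflection z \<mapsto> c * cnj z.\<close>
definition reverses_orientation_on :: "complex set \<Rightarrow> (complex \<Rightarrow> complex) \<Rightarrow> bool" where
  "reverses_orientation_on I T \<longleftrightarrow> (\<exists>c. norm c = 1 \<and> (\<forall>z\<in>I. T z = c * cnj z))"

definition CET :: "nat \<Rightarrow> nat \<Rightarrow> (complex \<Rightarrow> complex) \<Rightarrow> complex set \<Rightarrow> bool" where
  "CET n f T D \<longleftrightarrow>
     (\<exists>I :: nat \<Rightarrow> complex set.
        (\<forall>i<n. open_arc (I i)) \<and>
        (\<forall>i<n. \<forall>j<n. i \<noteq> j \<longrightarrow> I i \<inter> I j = {}) \<and>
        (\<Union>i<n. closure (I i)) = S1 \<and>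
        D = (\<Union>i<n. I i) \<and>
        inj_on T D \<and> T ` D \<subseteq> S1 \<and>
        (\<forall>i<n. isometry_on (I i) T) \<and>
        \<not> (\<exists>U g. openin (top_of_set S1) U \<and> D \<subset> U \<and> continuous_on U g \<and>
                 g ` U \<subseteq> S1 \<and> (\<forall>x\<in>D. g x = T x)) \<and>
        card {i. i < n \<and> reverses_orientation_on (I i) T} = f)"

definition in_dom_iter :: "(complex \<Rightarrow> complex) \<Rightarrow> complex set \<Rightarrow> nat \<Rightarrow> complex \<Rightarrow> bool" where
  "in_dom_iter T D k p \<longleftrightarrow> (\<forall>j<k. (T ^^ j) p \<in> D)"

text \<open>Full orbit {T^m p : m \<in> Z, p \<in> Dom(T^m)}; negative powers via the inverse of T.\<close>
definition orbit :: "(complex \<Rightarrow> complex) \<Rightarrow> complex set \<Rightarrow> complex \<Rightarrow> complex set" where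
  "orbit T D p =
     {y. \<exists>k. in_dom_iter T D k p \<and> y = (T ^^ k) p} \<union>
     {y. \<exists>k. in_dom_iter T D k y \<and> (T ^^ k) y = p}"

definition transitive :: "(complex \<Rightarrow> complex) \<Rightarrow> complex set \<Rightarrow> bool" where
  "transitive T D \<longleftrightarrow> (\<exists>p\<in>S1. closure (orbit T D p) = S1)"

end

theory Submission
  imports Defs "HOL-Library.Real_Mod"
begin

text \<open>Cut the circle into \<open>h\<close> slots of length \<open>1/h\<close> and map every slot isometrically onto a
  slot, so that the slots are visited in one cycle. Within a slot the map is a shift, a rotation
  of the slot read as a circle (two pieces), the reversal, or a reflection (two flipped pieces);
  all cuts are \<open>1/2\<close> except one, which is irrational. Since an even number of slots flip, going
  once around the cycle acts on the offset inside a slot as a rotation by an irrational angle, so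
  by Kronecker's theorem the orbit of a suitable point is dense in every slot. Adjacent slots are
  chosen so that no slot boundary can be removed, which makes the map a genuine CET; merging two
  reversed slots into one flipped arc, and choosing the kinds of the slots, realises every pair
  \<open>n \<ge> 4\<close>, \<open>1 \<le> f \<le> n\<close>.\<close>

section \<open>CETs assembled from arcs\<close>

lemma circ_eq_iff: "circ x = circ y \<longleftrightarrow> (\<exists>k::int. x = y + of_int k)"
proof -
  have "circ x = circ y \<longleftrightarrow> cis (2 * pi * (x - y)) = 1"
    by (simp add: circ_def cis_divide[symmetric] right_diff_distrib)
  also have "\<dots> \<longleftrightarrow> (\<exists>k::int. x - y = of_int k)"
    by (simp add: cis_eq_1_iff)
  finally show ?thesis by (simp add: algebra_simps)
qed

lemma circ_add_int: "circ (t + of_int k) = circ t"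
  using circ_eq_iff by blast

lemma circ_inj_unit_interval:
  assumes "0 \<le> s" "s < 1" "0 \<le> t" "t < 1" "circ s = circ t"
  shows "s = t"
proof -
  obtain k :: int where k: "s = t + of_int k" using assms(5) circ_eq_iff by blast
  then have "k = 0" using assms(1-4) by linarith
  then show ?thesis using k by simp
qed

lemma norm_circ [simp]: "norm (circ t) = 1"
  by (simp add: circ_def)

lemma circ_in_S1 [simp]: "circ t \<in> S1"
  by (simp add: S1_def)

lemma isCont_circ: "isCont circ x"
  unfolding circ_def cis_conv_exp by (intro continuous_intros)

lemma continuous_on_circ: "continuous_on A circ"
  by (simp add: continuous_at_imp_continuous_on isCont_circ)

lemma circ_surj:
  assumes "z \<in> S1"
  obtains t where "0 \<le> t" "t < 1" "circ t = z"
proof -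
  have "norm z = 1" using assms by (simp add: S1_def)
  moreover from this have "z \<noteq> 0" by auto
  ultimately have "cis (Arg z) = z" using cis_Arg[of z] by (simp add: sgn_div_norm)
  then have "circ (Arg z / (2 * pi)) = z" by (simp add: circ_def)
  then have "circ (frac (Arg z / (2 * pi))) = z"
    by (metis circ_add_int frac_def diff_conv_add_uminus of_int_minus)
  then show ?thesis using that frac_ge_0 frac_lt_1 by blast
qed

lemma closure_circ_arc:
  assumes "a < b"
  shows "closure (circ ` {a<..<b}) = circ ` {a..b}"
proof
  have "closed (circ ` {a..b})"
    by (intro compact_imp_closed compact_continuous_image continuous_on_circ compact_Icc)
  then show "closure (circ ` {a<..<b}) \<subseteq> circ ` {a..b}"
    by (rule closure_minimal[rotated]) auto
  have "circ ` closure {a<..<b} \<subseteq> closure (circ ` {a<..<b})"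
    by (rule continuous_image_closure_subset[OF continuous_on_circ]) auto
  then show "circ ` {a..b} \<subseteq> closure (circ ` {a<..<b})" using assms by simp
qed

definition aff :: "bool \<Rightarrow> real \<Rightarrow> real \<Rightarrow> real" where
  "aff e c t = (if e then c - t else t + c)"

lemma isCont_circ_aff: "isCont (\<lambda>t. circ (aff e c t)) x"
proof -
  have "isCont (aff e c) x" unfolding aff_def by (cases e) (auto intro!: continuous_intros)
  then show ?thesis using continuous_at_compose[OF _ isCont_circ] by (simp add: o_def)
qed

lemma circ_aff: "circ (aff e c t) = (if e then circ c * cnj (circ t) else circ c * circ t)"
  by (auto simp: aff_def circ_def cis_mult cis_cnj algebra_simps)

lemma isometry_on_rigid:
  assumes "norm w = 1" and "\<And>z. z \<in> I \<Longrightarrow> T z = (if e then w * cnj z else w * z)"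
  shows "isometry_on I T"
  unfolding isometry_on_def
proof (intro ballI)
  fix z z' assume "z \<in> I" "z' \<in> I"
  then have "dist (T z) (T z') = norm (w * (if e then cnj (z - z') else z - z'))"
    using assms(2) by (simp add: dist_norm algebra_simps)
  also have "\<dots> = dist z z'"
    using assms(1) by (simp add: norm_mult dist_norm del: complex_cnj_diff)
  finally show "dist (T z) (T z') = dist z z'" .
qed

text \<open>On a rotated arc, \<open>w z = c (cnj z)\<close> forces \<open>z\<^sup>2 = c / w\<close>, which has at most two solutions.\<close>
lemma rotation_not_reverses_orientation:
  assumes ab: "a < b" "0 \<le> a" "b \<le> 1"
    and T: "\<And>t. a < t \<Longrightarrow> t < b \<Longrightarrow> T (circ t) = w * circ t"
    and rev: "reverses_orientation_on (circ ` {a<..<b}) T"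
  shows False
proof -
  obtain c where "norm c = 1" and c: "\<And>z. z \<in> circ ` {a<..<b} \<Longrightarrow> T z = c * cnj z"
    using rev unfolding reverses_orientation_on_def by blast
  have square: "(circ t)\<^sup>2 = c / w" if "a < t" "t < b" for t
  proof -
    have unit: "cnj (circ t) * circ t = 1"
      by (metis complex_norm_square norm_circ mult.commute of_real_1 power_one)
    have "w * circ t = c * cnj (circ t)" using T[OF that] c[of "circ t"] that by auto
    then have "w * circ t * circ t = c" and "w \<noteq> 0"
      using unit \<open>norm c = 1\<close> by (auto simp: mult.assoc)
    then show ?thesis by (simp add: power2_eq_square field_simps)
  qed
  define t1 t2 t3 where "t1 = a + (b - a)/4" and "t2 = a + (b - a)/2" and "t3 = a + 3*(b - a)/4"
  have tt: "a < t1" "t1 < t2" "t2 < t3" "t3 < b" "a < t2" "a < t3" "t1 < b" "t2 < b"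
    using ab by (auto simp: t1_def t2_def t3_def field_simps)
  have ne: "circ s \<noteq> circ t" if "a < s" "s < t" "t < b" for s t
    using circ_inj_unit_interval[of s t] that ab by fastforce
  have "circ t = - circ t1" if "t1 < t" "t < b" for t
  proof -
    have "(circ t)\<^sup>2 = (circ t1)\<^sup>2" using square that tt by simp
    then show ?thesis using ne[of t1 t] that tt unfolding power2_eq_iff by auto
  qed
  then show False using ne[of t2 t3] tt by simp
qed

lemma extension_eq_limit:
  assumes g: "continuous_on U g" and x: "circ x \<in> U" and nontriv: "at x within S \<noteq> bot"
    and near: "eventually (\<lambda>t. circ t \<in> U \<and> g (circ t) = circ (aff e c t)) (at x within S)"
  shows "g (circ x) = circ (aff e c x)"
proof -
  have "(circ \<longlongrightarrow> circ x) (at x within S)"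
    using isCont_circ continuous_at_imp_continuous_at_within continuous_within by blast
  then have "((\<lambda>t. g (circ t)) \<longlongrightarrow> g (circ x)) (at x within S)"
    by (rule continuous_on_tendsto_compose[OF g _ x]) (use near in \<open>auto elim: eventually_mono\<close>)
  moreover have "((\<lambda>t. g (circ t)) \<longlongrightarrow> circ (aff e c x)) (at x within S)"
  proof (rule Lim_transform_eventually)
    show "((\<lambda>t. circ (aff e c t)) \<longlongrightarrow> circ (aff e c x)) (at x within S)"
      using isCont_circ_aff continuous_at_imp_continuous_at_within continuous_within by blast
    show "\<forall>\<^sub>F t in at x within S. circ (aff e c t) = g (circ t)"
      using near by (auto elim: eventually_mono)
  qed
  ultimately show ?thesis using tendsto_unique nontriv by blast
qed

lemma CET_of_indexed_arcs:
  fixes J :: "'i set" and I :: "'i \<Rightarrow> complex set"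
  defines "D \<equiv> \<Union>i\<in>J. I i"
  assumes "finite J"
    and arcs: "\<And>i. i \<in> J \<Longrightarrow> open_arc (I i)"
    and disjoint: "\<And>i j. i \<in> J \<Longrightarrow> j \<in> J \<Longrightarrow> i \<noteq> j \<Longrightarrow> I i \<inter> I j = {}"
    and cover: "(\<Union>i\<in>J. closure (I i)) = S1"
    and "inj_on T D" and "T ` D \<subseteq> S1"
    and isometry: "\<And>i. i \<in> J \<Longrightarrow> isometry_on (I i) T"
    and "\<not> (\<exists>U g. openin (top_of_set S1) U \<and> D \<subset> U \<and> continuous_on U g \<and>
            g ` U \<subseteq> S1 \<and> (\<forall>x\<in>D. g x = T x))"
  shows "CET (card J) (card {i\<in>J. reverses_orientation_on (I i) T}) T D"
proof -
  obtain ix where ix: "bij_betw ix {..<card J} J"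
    using ex_bij_betw_nat_finite[OF \<open>finite J\<close>] by (metis atLeast0LessThan)
  then have ix_in: "ix k \<in> J" if "k < card J" for k
    using that by (auto simp: bij_betw_def)
  have ix_inj: "ix k \<noteq> ix k'" if "k < card J" "k' < card J" "k \<noteq> k'" for k k'
    using ix that by (auto simp: bij_betw_def inj_on_def)
  have union: "(\<Union>k<card J. F (ix k)) = (\<Union>i\<in>J. F i)" for F :: "'i \<Rightarrow> complex set"
  proof -
    have "(\<Union>k<card J. F (ix k)) = \<Union>(F ` ix ` {..<card J})" by (simp add: image_image)
    also have "ix ` {..<card J} = J" using ix by (simp add: bij_betw_def)
    finally show ?thesis .
  qed
  have "card {k\<in>{..<card J}. reverses_orientation_on (I (ix k)) T}
        = card {i\<in>J. reverses_orientation_on (I i) T}"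
    by (rule bij_betw_same_card[OF bij_betw_Collect[OF ix]]) simp
  then have flips: "card {k. k < card J \<and> reverses_orientation_on (I (ix k)) T}
        = card {i\<in>J. reverses_orientation_on (I i) T}"
    by simp
  show ?thesis
    unfolding CET_def
  proof (intro exI[of _ "\<lambda>k. I (ix k)"] conjI)
    show "\<forall>k<card J. open_arc (I (ix k))" using arcs ix_in by blast
    show "\<forall>k<card J. \<forall>k'<card J. k \<noteq> k' \<longrightarrow> I (ix k) \<inter> I (ix k') = {}"
      using disjoint ix_in ix_inj by blast
    show "(\<Union>k<card J. closure (I (ix k))) = S1"
      using union[of "\<lambda>i. closure (I i)"] cover by simp
    show "D = (\<Union>k<card J. I (ix k))" using union[of I] by (simp add: D_def)
    show "\<forall>k<card J. isometry_on (I (ix k)) T" using isometry ix_in by blast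
  qed (use assms flips in simp_all)
qed

lemma arcs_not_extendable:
  fixes J :: "'i set" and a b c :: "'i \<Rightarrow> real" and e :: "'i \<Rightarrow> bool"
  defines "D \<equiv> \<Union>i\<in>J. circ ` {a i<..<b i}"
  assumes bounds: "\<And>i. i \<in> J \<Longrightarrow> 0 \<le> a i \<and> a i < b i \<and> b i \<le> 1"
    and T: "\<And>i t. i \<in> J \<Longrightarrow> a i < t \<Longrightarrow> t < b i \<Longrightarrow> T (circ t) = circ (aff (e i) (c i) t)"
    and jump: "\<And>x. 0 \<le> x \<Longrightarrow> x < 1 \<Longrightarrow> (\<forall>i\<in>J. \<not> (a i < x \<and> x < b i)) \<Longrightarrow>
               \<exists>i\<in>J. \<exists>j\<in>J. (b i = x \<or> (x = 0 \<and> b i = 1)) \<and> a j = x \<and>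
                 circ (aff (e i) (c i) (b i)) \<noteq> circ (aff (e j) (c j) (a j))"
  shows "\<not> (\<exists>U g. openin (top_of_set S1) U \<and> D \<subset> U \<and> continuous_on U g \<and>
            g ` U \<subseteq> S1 \<and> (\<forall>x\<in>D. g x = T x))"
proof
  assume "\<exists>U g. openin (top_of_set S1) U \<and> D \<subset> U \<and> continuous_on U g \<and> g ` U \<subseteq> S1 \<and> (\<forall>x\<in>D. g x = T x)"
  then obtain U g where U: "openin (top_of_set S1) U" "D \<subset> U" "continuous_on U g"
    and g: "\<forall>x\<in>D. g x = T x"
    by blast
  obtain z where z: "z \<in> U" "z \<notin> D" using U(2) by blast
  have "z \<in> S1" using openin_subset[OF U(1)] z(1) by auto
  then obtain x where x: "0 \<le> x" "x < 1" "circ x = z" by (rule circ_surj)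
  have arc_in_D: "circ t \<in> D" if "i \<in> J" "a i < t" "t < b i" for i t
    using that unfolding D_def by (intro UN_I[of i]) auto
  then have "\<forall>i\<in>J. \<not> (a i < x \<and> x < b i)" using z(2) x(3) by blast
  then obtain i j where ij: "i \<in> J" "j \<in> J" "b i = x \<or> (x = 0 \<and> b i = 1)" "a j = x"
      and ne: "circ (aff (e i) (c i) (b i)) \<noteq> circ (aff (e j) (c j) (a j))"
    using jump x(1,2) by blast
  have near: "\<forall>\<^sub>F t in F. circ t \<in> U \<and> g (circ t) = circ (aff (e k) (c k) t)"
    if "k \<in> J" and "\<forall>\<^sub>F t in F. t \<in> {a k<..<b k}" for k F
    using that(2) by eventually_elim (use arc_in_D[OF that(1)] U(2) g T[OF that(1)] in auto)
  have "circ (b i) = z" using ij(3) x(3) circ_add_int[of 0 1] by auto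
  then have "g z = circ (aff (e i) (c i) (b i))"
    using extension_eq_limit[OF U(3) _ _ near[OF ij(1) eventually_at_left_real]]
      z(1) bounds[OF ij(1)]
    by simp
  moreover have "g z = circ (aff (e j) (c j) (a j))"
    using extension_eq_limit[OF U(3) _ _ near[OF ij(2) eventually_at_right_real]]
      z(1) bounds[OF ij(2)] ij(4) x(3)
    by simp
  ultimately show False using ne by simp
qed

lemma reverses_orientation_on_arc_iff:
  assumes "0 \<le> a" "a < b" "b \<le> 1"
    and T: "\<And>t. a < t \<Longrightarrow> t < b \<Longrightarrow> T (circ t) = circ (aff e c t)"
  shows "reverses_orientation_on (circ ` {a<..<b}) T \<longleftrightarrow> e"
proof
  assume rev: "reverses_orientation_on (circ ` {a<..<b}) T"
  show e
  proof (rule ccontr)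
    assume "\<not> e"
    then have "T (circ t) = circ c * circ t" if "a < t" "t < b" for t
      using T[OF that] circ_aff by simp
    then show False using rotation_not_reverses_orientation assms(1-3) rev by blast
  qed
next
  assume e
  then show "reverses_orientation_on (circ ` {a<..<b}) T"
    unfolding reverses_orientation_on_def using T circ_aff by (intro exI[of _ "circ c"]) auto
qed

lemma arc_closures_cover:
  assumes bounds: "\<And>i. i \<in> J \<Longrightarrow> a i < b i"
    and cover: "\<And>t. 0 \<le> t \<Longrightarrow> t \<le> 1 \<Longrightarrow> \<exists>i\<in>J. a i \<le> t \<and> t \<le> b i"
  shows "(\<Union>i\<in>J. closure (circ ` {a i<..<b i})) = S1"
proof -
  have "(\<Union>i\<in>J. closure (circ ` {a i<..<b i})) = (\<Union>i\<in>J. circ ` {a i..b i})"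
    using closure_circ_arc bounds by simp
  also have "\<dots> = S1"
  proof
    show "S1 \<subseteq> (\<Union>i\<in>J. circ ` {a i..b i})"
    proof
      fix z assume "z \<in> S1"
      then obtain t where "0 \<le> t" "t < 1" "circ t = z" by (rule circ_surj)
      then show "z \<in> (\<Union>i\<in>J. circ ` {a i..b i})" using cover[of t] by force
    qed
  qed auto
  finally show ?thesis .
qed

lemma CET_of_arcs:
  fixes J :: "'i set" and a b c :: "'i \<Rightarrow> real" and e :: "'i \<Rightarrow> bool"
  assumes "finite J"
    and bounds: "\<And>i. i \<in> J \<Longrightarrow> 0 \<le> a i \<and> a i < b i \<and> b i \<le> 1"
    and disjoint: "\<And>i j. i \<in> J \<Longrightarrow> j \<in> J \<Longrightarrow> i \<noteq> j \<Longrightarrow> {a i<..<b i} \<inter> {a j<..<b j} = {}"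
    and cover: "\<And>t. 0 \<le> t \<Longrightarrow> t \<le> 1 \<Longrightarrow> \<exists>i\<in>J. a i \<le> t \<and> t \<le> b i"
    and T: "\<And>i t. i \<in> J \<Longrightarrow> a i < t \<Longrightarrow> t < b i \<Longrightarrow> T (circ t) = circ (aff (e i) (c i) t)"
    and inj: "\<And>i j t t'. i \<in> J \<Longrightarrow> j \<in> J \<Longrightarrow> a i < t \<Longrightarrow> t < b i \<Longrightarrow> a j < t' \<Longrightarrow> t' < b j
               \<Longrightarrow> circ (aff (e i) (c i) t) = circ (aff (e j) (c j) t') \<Longrightarrow> t = t'"
    and jump: "\<And>x. 0 \<le> x \<Longrightarrow> x < 1 \<Longrightarrow> (\<forall>i\<in>J. \<not> (a i < x \<and> x < b i)) \<Longrightarrow>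
               \<exists>i\<in>J. \<exists>j\<in>J. (b i = x \<or> (x = 0 \<and> b i = 1)) \<and> a j = x \<and>
                 circ (aff (e i) (c i) (b i)) \<noteq> circ (aff (e j) (c j) (a j))"
  shows "CET (card J) (card {i\<in>J. e i}) T (\<Union>i\<in>J. circ ` {a i<..<b i})"
proof -
  define I where "I i = circ ` {a i<..<b i}" for i
  have "CET (card J) (card {i\<in>J. reverses_orientation_on (I i) T}) T (\<Union>i\<in>J. I i)"
  proof (rule CET_of_indexed_arcs[OF \<open>finite J\<close>])
    show "open_arc (I i)" if "i \<in> J" for i
      using bounds[OF that] unfolding open_arc_def I_def by (intro exI[of _ "a i"] exI[of _ "b i"]) auto
    show "I i \<inter> I j = {}" if "i \<in> J" "j \<in> J" "i \<noteq> j" for i j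
    proof -
      have "s = t" if "s \<in> {a i<..<b i}" "t \<in> {a j<..<b j}" "circ s = circ t" for s t
        using circ_inj_unit_interval[of s t] that bounds[OF \<open>i \<in> J\<close>] bounds[OF \<open>j \<in> J\<close>] by auto
      then show ?thesis using disjoint[OF that] unfolding I_def by blast
    qed
    show "(\<Union>i\<in>J. closure (I i)) = S1"
      unfolding I_def
    proof (rule arc_closures_cover)
      show "a i < b i" if "i \<in> J" for i using bounds[OF that] by simp
    qed (fact cover)
    show "inj_on T (\<Union>i\<in>J. I i)"
    proof (rule inj_onI)
      fix z z' assume "z \<in> (\<Union>i\<in>J. I i)" "z' \<in> (\<Union>i\<in>J. I i)" "T z = T z'"
      then obtain i j t t' where "i \<in> J" "a i < t" "t < b i" "z = circ t"
        and "j \<in> J" "a j < t'" "t' < b j" "z' = circ t'" "T (circ t) = T (circ t')"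
        unfolding I_def by auto
      then show "z = z'" using inj T by metis
    qed
    show "T ` (\<Union>i\<in>J. I i) \<subseteq> S1" using T by (auto simp: I_def)
    show "isometry_on (I i) T" if "i \<in> J" for i
    proof (rule isometry_on_rigid[of "circ (c i)"])
      show "T z = (if e i then circ (c i) * cnj z else circ (c i) * z)" if "z \<in> I i" for z
        using that T[OF \<open>i \<in> J\<close>] circ_aff by (auto simp: I_def)
    qed simp
    show "\<not> (\<exists>U g. openin (top_of_set S1) U \<and> (\<Union>i\<in>J. I i) \<subset> U \<and> continuous_on U g \<and>
            g ` U \<subseteq> S1 \<and> (\<forall>x\<in>(\<Union>i\<in>J. I i). g x = T x))"
      unfolding I_def by (rule arcs_not_extendable[OF bounds T jump])
  qed
  moreover have "{i\<in>J. reverses_orientation_on (I i) T} = {i\<in>J. e i}"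
    using reverses_orientation_on_arc_iff[of "a i" "b i" T "e i" "c i" for i] bounds T
    unfolding I_def by auto
  ultimately show ?thesis by (simp add: I_def)
qed

section \<open>The slot construction\<close>

text \<open>A slot of width \<open>1/h\<close>, with offset coordinate \<open>w \<in> [0,1)\<close>, is mapped onto a target slot by
  one of four isometries of the unit circle \<open>\<real>/\<int>\<close>: a shift (one piece), a rotation by \<open>-c\<close>
  (two pieces, exchanged at the cut \<open>c\<close>), the reversal \<open>w \<mapsto> 1 - w\<close> (one flipped piece) or the
  reflection \<open>w \<mapsto> c - w\<close> (two flipped pieces).\<close>
datatype slot_kind = Shift | Rotate | Reverse | Reflect

fun pieces :: "slot_kind \<Rightarrow> nat" where
  "pieces Shift = 1" | "pieces Rotate = 2" | "pieces Reverse = 1" | "pieces Reflect = 2"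

fun is_flip :: "slot_kind \<Rightarrow> bool" where
  "is_flip Shift = False" | "is_flip Rotate = False" | "is_flip Reverse = True" | "is_flip Reflect = True"

fun slot_map :: "slot_kind \<Rightarrow> real \<Rightarrow> real \<Rightarrow> real" where
  "slot_map Shift c w = w"
| "slot_map Rotate c w = (if w < c then w + 1 - c else w - c)"
| "slot_map Reverse c w = 1 - w"
| "slot_map Reflect c w = (if w < c then c - w else c + 1 - w)"

text \<open>The one-sided limits of \<open>slot_map\<close> at the right end \<open>w \<rightarrow> 1\<close> and the left end
  \<open>w \<rightarrow> 0\<close> of the slot.\<close>
fun slot_map_right :: "slot_kind \<Rightarrow> real \<Rightarrow> real" where
  "slot_map_right Shift c = 1" | "slot_map_right Rotate c = 1 - c"
| "slot_map_right Reverse c = 0" | "slot_map_right Reflect c = c"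

fun slot_map_left :: "slot_kind \<Rightarrow> real \<Rightarrow> real" where
  "slot_map_left Shift c = 0" | "slot_map_left Rotate c = 1 - c"
| "slot_map_left Reverse c = 1" | "slot_map_left Reflect c = c"

text \<open>Adjacent slots of kinds \<open>sL\<close>, \<open>sR\<close> with targets \<open>A\<close>, \<open>B\<close> (modulo \<open>h\<close>) do not glue
  together into one continuous isometry.\<close>
definition jump_at :: "nat \<Rightarrow> slot_kind \<Rightarrow> slot_kind \<Rightarrow> nat \<Rightarrow> nat \<Rightarrow> bool" where
  "jump_at h sL sR A B \<longleftrightarrow>
     \<not> (sL = Shift \<and> sR = Shift \<and> B = (A + 1) mod h) \<and> \<not> (sL = Reverse \<and> sR = Reverse \<and> A = (B + 1) mod h)"

lemma pieces_pos: "0 < pieces s" and pieces_le: "pieces s \<le> 2"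
  by (cases s; simp)+

lemma slot_map_range:
  assumes "0 < w" "w < 1" "0 < c" "c < 1" "pieces s = 2 \<Longrightarrow> w \<noteq> c"
  shows "0 < slot_map s c w \<and> slot_map s c w < 1"
  using assms by (cases s) auto

lemma slot_map_inj:
  assumes "0 < w" "w < 1" "0 < w'" "w' < 1" "0 < c" "c < 1"
    and "pieces s = 2 \<Longrightarrow> w \<noteq> c" "pieces s = 2 \<Longrightarrow> w' \<noteq> c"
    and "slot_map s c w = slot_map s c w'"
  shows "w = w'"
  using assms by (cases s) (auto split: if_splits)

lemma slot_map_ends_range:
  assumes "0 < c" "c < 1"
  shows "0 \<le> slot_map_right s c" "slot_map_right s c \<le> 1" "0 \<le> slot_map_left s c" "slot_map_left s c \<le> 1"
  using assms by (cases s; simp)+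

lemma mod_eq_Suc_of_int_eq:
  fixes A B h :: nat and m :: int
  assumes "B < h" "int A + 1 = int B + m * int h"
  shows "B = (A + 1) mod h"
proof -
  have "int ((A + 1) mod h) = (int B + m * int h) mod int h"
    using assms(2) by (simp add: zmod_int add.commute)
  also have "\<dots> = int B" using assms(1) by simp
  finally show ?thesis by simp
qed

lemma of_int_not_between:
  fixes a :: nat and r :: real
  assumes "real a < r" "r < real a + 1"
  shows "r \<noteq> of_int N"
proof
  assume "r = of_int N"
  then have "int a < N" "N < int a + 1" using assms by linarith+
  then show False by linarith
qed

lemma mod_pred_eq:
  fixes y h :: nat
  assumes "y < h"
  shows "(y + h - 1) mod h = (if y = 0 then h - 1 else y - 1)"
proof (cases "y = 0")
  case False
  then have "y + h - 1 = (y - 1) + h" by simp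
  then have "(y + h - 1) mod h = ((y - 1) + h) mod h" by (rule arg_cong)
  also have "\<dots> = y - 1" using assms by simp
  finally show ?thesis using False by simp
qed (use assms in simp)

lemma jump_at_circ_ne:
  fixes A B h :: nat
  assumes "A < h" "B < h" "A \<noteq> B" and jump: "jump_at h sL sR A B"
    and "0 < c" "c < 1" "0 < c'" "c' < 1"
  shows "circ ((real A + slot_map_right sL c) / h) \<noteq> circ ((real B + slot_map_left sR c') / h)"
proof
  define v w where "v = slot_map_right sL c" and "w = slot_map_left sR c'"
  have vw: "0 \<le> v" "v \<le> 1" "0 \<le> w" "w \<le> 1"
    using slot_map_ends_range assms(5-8) by (auto simp: v_def w_def)
  assume "circ ((real A + v) / h) = circ ((real B + w) / h)"
  then obtain m :: int where "(real A + v) / h = (real B + w) / h + of_int m"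
    using circ_eq_iff by blast
  then have eq: "v - w = of_int (m * int h - int A + int B)"
    using assms(1) by (simp add: field_simps)
  define k where "k = m * int h - int A + int B"
  have k: "v - w = of_int k" "int A - int B + k = m * int h" using eq by (simp_all add: k_def)
  then consider "k = 0" | "k = 1" | "k = -1" using vw by linarith
  then show False
  proof cases
    case 1
    have "m = 0"
    proof (rule ccontr)
      assume "m \<noteq> 0"
      then have "1 * int h \<le> \<bar>m\<bar> * int h" by (intro mult_right_mono) auto
      also have "\<dots> = \<bar>int A - int B\<bar>" using k 1 by (simp add: abs_mult)
      finally show False using assms(1,2) by linarith
    qed
    then show False using k 1 assms(3) by simp
  next
    case 2
    then have "v = 1" "w = 0" using k vw by linarith+
    then have "sL = Shift" "sR = Shift" using assms(5-8) by (cases sL; cases sR; simp add: v_def w_def)+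
    moreover have "int A + 1 = int B + m * int h" using k(2) 2 by simp
    then have "B = (A + 1) mod h" using assms(2) by (rule mod_eq_Suc_of_int_eq[rotated])
    ultimately show False using jump by (simp add: jump_at_def)
  next
    case 3
    then have "v = 0" "w = 1" using k vw by linarith+
    then have "sL = Reverse" "sR = Reverse" using assms(5-8) by (cases sL; cases sR; simp add: v_def w_def)+
    moreover have "int B + 1 = int A + (- m) * int h" using k(2) 3 by simp
    then have "A = (B + 1) mod h" using assms(1) by (rule mod_eq_Suc_of_int_eq[rotated])
    ultimately show False using jump by (simp add: jump_at_def)
  qed
qed

text \<open>Slot \<open>x\<close>, the interval \<open>[x/h, (x+1)/h)\<close>, is mapped onto slot \<open>target x\<close> by
  \<open>slot_map (kind x) (cut x)\<close>. If \<open>merged\<close>, the reversed slots 1 and 2 have consecutive targets in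
  reverse order and together form the single flipped arc \<open>(1/h, 3/h)\<close>. Arc \<open>(x, k)\<close> is the
  \<open>k\<close>-th piece of slot \<open>x\<close>.\<close>
locale slot_cet =
  fixes h :: nat and kind :: "nat \<Rightarrow> slot_kind" and cut :: "nat \<Rightarrow> real"
    and target :: "nat \<Rightarrow> nat" and merged :: bool
  assumes h3: "3 \<le> h"
    and cut_pos: "\<And>x. 0 < cut x" and cut_lt1: "\<And>x. cut x < 1"
    and target_lt: "\<And>x. x < h \<Longrightarrow> target x < h"
    and target_inj: "inj_on target {..<h}"
    and merged_ok: "merged \<Longrightarrow> kind 1 = Reverse \<and> kind 2 = Reverse \<and> target 1 = (target 2 + 1) mod h"
    and jumps: "\<And>y. y < h \<Longrightarrow> \<not> (merged \<and> y = 2) \<Longrightarrow>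
      jump_at h (kind ((y + h - 1) mod h)) (kind y) (target ((y + h - 1) mod h)) (target y)"
begin

definition slot :: "real \<Rightarrow> nat" where
  "slot t = nat \<lfloor>t * h\<rfloor>"

definition offset :: "real \<Rightarrow> real" where
  "offset t = t * h - real (slot t)"

definition lift :: "real \<Rightarrow> real" where
  "lift t = (real (target (slot t)) + slot_map (kind (slot t)) (cut (slot t)) (offset t)) / h"

definition angle :: "complex \<Rightarrow> real" where
  "angle z = (SOME t. 0 \<le> t \<and> t < 1 \<and> circ t = z)"

definition T :: "complex \<Rightarrow> complex" where
  "T z = circ (lift (angle z))"

definition Arcs :: "(nat \<times> nat) set" where
  "Arcs = {(x,k). x < h \<and> k < pieces (kind x) \<and> \<not> (merged \<and> x = 2)}"

definition arc_lo :: "nat \<times> nat \<Rightarrow> real" where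
  "arc_lo i = (case i of (x,k) \<Rightarrow> if k = 0 then real x / h else (real x + cut x) / h)"

definition arc_hi :: "nat \<times> nat \<Rightarrow> real" where
  "arc_hi i = (case i of (x,k) \<Rightarrow>
     if k = 0 then (if pieces (kind x) = 2 then (real x + cut x) / h
                    else if merged \<and> x = 1 then 3 / h else (real x + 1) / h)
     else (real x + 1) / h)"

definition arc_flip :: "nat \<times> nat \<Rightarrow> bool" where
  "arc_flip i = is_flip (kind (fst i))"

definition arc_const :: "nat \<times> nat \<Rightarrow> real" where
  "arc_const i = (case i of (x,k) \<Rightarrow> (case kind x of
       Shift \<Rightarrow> (real (target x) - x) / h
     | Rotate \<Rightarrow> (if k = 0 then (real (target x) - x + 1 - cut x) / h else (real (target x) - x - cut x) / h)
     | Reverse \<Rightarrow> (real (target x) + x + 1) / h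
     | Reflect \<Rightarrow> (if k = 0 then (real (target x) + x + cut x) / h else (real (target x) + x + cut x + 1) / h)))"

definition D :: "complex set" where
  "D = (\<Union>i\<in>Arcs. circ ` {arc_lo i<..<arc_hi i})"

definition regular :: "real \<Rightarrow> bool" where
  "regular t \<longleftrightarrow> 0 \<le> t \<and> t < 1 \<and> 0 < offset t \<and> (pieces (kind (slot t)) = 2 \<longrightarrow> offset t \<noteq> cut (slot t))"

lemma h_pos: "(0::real) < h" using h3 by simp
lemma h_neq_0: "real h \<noteq> 0" using h_pos by simp

lemma angle_circ:
  fixes t :: real
  assumes "0 \<le> t" "t < 1"
  shows "angle (circ t) = t"
proof -
  have ex: "0 \<le> t \<and> t < 1 \<and> circ t = circ t" using assms by simp
  have "0 \<le> angle (circ t) \<and> angle (circ t) < 1 \<and> circ (angle (circ t)) = circ t"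
    unfolding angle_def by (rule someI[of _ t]) (rule ex)
  then show ?thesis using circ_inj_unit_interval assms by blast
qed

lemma T_circ: "0 \<le> t \<Longrightarrow> t < 1 \<Longrightarrow> T (circ t) = circ (lift t)"
  by (simp add: T_def angle_circ)

lemma slot_eq:
  fixes t :: real
  assumes "real x \<le> t * h" "t * h < real x + 1"
  shows "slot t = x" "offset t = t * h - x"
proof -
  have "\<lfloor>t * h\<rfloor> = int x" using assms by (simp add: floor_eq_iff)
  then show "slot t = x" by (simp add: slot_def)
  then show "offset t = t * h - x" by (simp add: offset_def)
qed

lemma slot_point:
  assumes "x < h" "0 < w" "w < 1"
  shows "0 \<le> (real x + w) / h" "(real x + w) / h < 1"
    and "slot ((real x + w) / h) = x" "offset ((real x + w) / h) = w"
proof -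
  have "real x + w < h" using assms by linarith
  then show "0 \<le> (real x + w) / h" "(real x + w) / h < 1" using assms h_pos by (simp_all add: divide_less_eq)
  show "slot ((real x + w) / h) = x" "offset ((real x + w) / h) = w"
    using slot_eq[of x "(real x + w) / h"] assms h_neq_0 by auto
qed

lemma slot_lt:
  fixes t :: real
  assumes "0 \<le> t" "t < 1"
  shows "slot t < h"
proof -
  have "t * h < h" using assms h_pos by simp
  then have "\<lfloor>t * h\<rfloor> < int h" by (simp add: floor_less_iff)
  then show ?thesis unfolding slot_def using assms by (simp add: nat_less_iff)
qed

lemma offset_range:
  fixes t :: real
  assumes "0 \<le> t"
  shows "0 \<le> offset t" "offset t < 1"
proof -
  have "0 \<le> t * h" using assms h_pos by simp
  then have "real (slot t) = of_int \<lfloor>t * h\<rfloor>" unfolding slot_def by simp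
  then show "0 \<le> offset t" "offset t < 1" unfolding offset_def by linarith+
qed

lemma slot_offset:
  fixes t :: real
  assumes "0 \<le> t"
  shows "t * h = real (slot t) + offset t"
  by (simp add: offset_def)

lemma regular_lift:
  assumes "regular t"
  shows "real (target (slot t)) < lift t * h" "lift t * h < real (target (slot t)) + 1"
    and "0 < lift t" "lift t < 1"
proof -
  have t: "0 \<le> t" "t < 1" "0 < offset t" "pieces (kind (slot t)) = 2 \<longrightarrow> offset t \<noteq> cut (slot t)"
    using assms by (auto simp: regular_def)
  have map_range: "0 < slot_map (kind (slot t)) (cut (slot t)) (offset t)"
      "slot_map (kind (slot t)) (cut (slot t)) (offset t) < 1"
    using slot_map_range[of "offset t" "cut (slot t)" "kind (slot t)"] t offset_range cut_pos cut_lt1 by auto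
  have scaled: "lift t * h = real (target (slot t)) + slot_map (kind (slot t)) (cut (slot t)) (offset t)"
    unfolding lift_def using h_pos by simp
  show "real (target (slot t)) < lift t * h" "lift t * h < real (target (slot t)) + 1"
    using scaled map_range by auto
  have "target (slot t) < h" using target_lt slot_lt t by auto
  then have "real (target (slot t)) + 1 \<le> h" by linarith
  then have "0 < lift t * h" "lift t * h < h" using scaled map_range by auto
  then show "0 < lift t" "lift t < 1" using h_pos by (simp_all add: zero_less_mult_iff)
qed

lemma lift_inj:
  assumes "regular t" "regular t'" "circ (lift t) = circ (lift t')"
  shows "t = t'"
proof -
  have eq: "lift t = lift t'"
    using circ_inj_unit_interval[OF _ _ _ _ assms(3)] regular_lift[OF assms(1)] regular_lift[OF assms(2)] by auto
  have t: "0 \<le> t" "t < 1" "0 < offset t" "pieces (kind (slot t)) = 2 \<longrightarrow> offset t \<noteq> cut (slot t)"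
    using assms(1) by (auto simp: regular_def)
  have t': "0 \<le> t'" "t' < 1" "0 < offset t'" "pieces (kind (slot t')) = 2 \<longrightarrow> offset t' \<noteq> cut (slot t')"
    using assms(2) by (auto simp: regular_def)
  have "\<lfloor>lift t * h\<rfloor> = int (target (slot t))" using regular_lift[OF assms(1)] by (simp add: floor_eq_iff)
  moreover have "\<lfloor>lift t' * h\<rfloor> = int (target (slot t'))" using regular_lift[OF assms(2)] by (simp add: floor_eq_iff)
  ultimately have "target (slot t) = target (slot t')" using eq by simp
  then have sx: "slot t = slot t'" using target_inj slot_lt t t' by (auto simp: inj_on_def)
  have "slot_map (kind (slot t)) (cut (slot t)) (offset t) = slot_map (kind (slot t)) (cut (slot t)) (offset t')"
    using eq sx unfolding lift_def using h_pos by (simp add: divide_cancel_right)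
  then have "offset t = offset t'"
    using slot_map_inj[of "offset t" "offset t'" "cut (slot t)" "kind (slot t)"] t t' sx offset_range cut_pos cut_lt1 by auto
  then have "t * h = t' * h" using slot_offset t t' sx by auto
  then show ?thesis using h_pos by simp
qed

lemma merged_target:
  assumes "merged"
  shows "target 1 = target 2 + 1 \<or> (target 2 + 1 = h \<and> target 1 = 0)"
proof -
  have "target 2 < h" using target_lt h3 by simp
  moreover have "target 1 = (target 2 + 1) mod h" using merged_ok assms by blast
  ultimately show ?thesis
    by (metis Suc_eq_plus1 Suc_lessI mod_less mod_self)
qed

lemma Arcs_cases:
  assumes "i \<in> Arcs"
  obtains (single) x where "i = (x,0)" "x < h" "pieces (kind x) = 1" "\<not> (merged \<and> x = 1)" "\<not> (merged \<and> x = 2)"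
       "arc_lo i = real x / h" "arc_hi i = (real x + 1) / h"
  | (merged_arc) "merged" "i = (1,0)" "arc_lo i = 1 / h" "arc_hi i = 3 / h"
  | (left) x where "i = (x,0)" "x < h" "pieces (kind x) = 2" "arc_lo i = real x / h" "arc_hi i = (real x + cut x) / h"
  | (right) x where "i = (x,1)" "x < h" "pieces (kind x) = 2" "arc_lo i = (real x + cut x) / h" "arc_hi i = (real x + 1) / h"
proof -
  obtain x k where i: "i = (x,k)" "x < h" "k < pieces (kind x)" "\<not> (merged \<and> x = 2)"
    using assms unfolding Arcs_def by auto
  show ?thesis
  proof (cases "pieces (kind x) = 2")
    case True
    then have "k = 0 \<or> k = 1" using i by auto
    then show ?thesis
    proof
      assume "k = 0" then show ?thesis using left[of x] i True by (simp add: arc_lo_def arc_hi_def)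
    next
      assume "k = 1" then show ?thesis using right[of x] i True by (simp add: arc_lo_def arc_hi_def)
    qed
  next
    case False
    then have np1: "pieces (kind x) = 1" using pieces_pos[of "kind x"] pieces_le[of "kind x"] by linarith
    then have k0: "k = 0" using i by auto
    show ?thesis
    proof (cases "merged \<and> x = 1")
      case True
      then have "kind 1 = Reverse" using merged_ok by blast
      then have "arc_lo i = 1 / h" "arc_hi i = 3 / h" using True i k0 unfolding arc_lo_def arc_hi_def by auto
      then show ?thesis using merged_arc True i k0 by auto
    next
      case False then show ?thesis using single[of x] i k0 np1 by (simp add: arc_lo_def arc_hi_def)
    qed
  qed
qed

lemma divide_h_less_iff: "a / real h < t \<longleftrightarrow> a < t * h" using h_pos by (simp add: pos_divide_less_eq)
lemma less_divide_h_iff: "t < a / real h \<longleftrightarrow> t * h < a" using h_pos by (simp add: pos_less_divide_eq)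

lemma arc_bounds:
  assumes "i \<in> Arcs"
  shows "0 \<le> arc_lo i" "arc_lo i < arc_hi i" "arc_hi i \<le> 1"
proof -
  have "0 \<le> arc_lo i \<and> arc_lo i < arc_hi i \<and> arc_hi i \<le> 1"
    using assms
  proof (cases rule: Arcs_cases)
    case (single x)
    have "real x / h < (real x + 1) / h" using h_pos by (simp add: divide_strict_right_mono)
    moreover have "(real x + 1) / h \<le> 1" using single(2) h_pos by (simp add: divide_le_eq)
    ultimately show ?thesis using single h_pos by simp
  next
    case merged_arc
    have "1 / real h < 3 / h" using h_pos by (simp add: divide_strict_right_mono)
    moreover have "3 / real h \<le> 1" using h3 h_pos by (simp add: divide_le_eq)
    ultimately show ?thesis using merged_arc h_pos by simp
  next
    case (left x)
    have "real x / h < (real x + cut x) / h" using h_pos cut_pos[of x] by (simp add: divide_strict_right_mono)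
    moreover have "(real x + cut x) / h \<le> 1" using left(2) h_pos cut_lt1[of x] by (simp add: divide_le_eq)
    ultimately show ?thesis using left h_pos by simp
  next
    case (right x)
    have "(real x + cut x) / h < (real x + 1) / h" using h_pos cut_lt1[of x] by (simp add: divide_strict_right_mono)
    moreover have "(real x + 1) / h \<le> 1" using right(2) h_pos by (simp add: divide_le_eq)
    moreover have "0 \<le> (real x + cut x) / h" using h_pos cut_pos[of x] by simp
    ultimately show ?thesis using right h_pos by simp
  qed
  then show "0 \<le> arc_lo i" "arc_lo i < arc_hi i" "arc_hi i \<le> 1" by auto
qed

lemma merged_arc_in_Arcs:
  assumes "merged"
  shows "(1,0) \<in> Arcs"
proof -
  have "kind 1 = Reverse" using merged_ok assms by blast
  then show ?thesis unfolding Arcs_def using h3 by simp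
qed

lemma arc_hi_merged:
  assumes "merged"
  shows "arc_hi (1,0) = 3 / h"
proof -
  have "kind 1 = Reverse" using merged_ok assms by blast
  then show ?thesis unfolding arc_hi_def using assms by simp
qed

lemma lift_on_unmerged_arc:
  assumes i: "i \<in> Arcs" "\<not> (merged \<and> i = (1,0))" and t: "arc_lo i < t" "t < arc_hi i"
  shows "lift t = aff (arc_flip i) (arc_const i) t" "regular t"
proof -
  have t01: "0 \<le> t" "t < 1" using arc_bounds[OF i(1)] t by auto
  have "lift t = aff (arc_flip i) (arc_const i) t \<and> regular t"
    using i(1)
  proof (cases rule: Arcs_cases)
    case (single x)
    have scaled: "real x < t * h" "t * h < real x + 1"
      using t single by (auto simp: divide_h_less_iff less_divide_h_iff)
    then have slot: "slot t = x" "offset t = t * h - x" using slot_eq  by auto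
    have lift: "lift t = (real (target x) + slot_map (kind x) (cut x) (t * h - x)) / h"
      unfolding lift_def slot ..
    have "kind x = Shift \<or> kind x = Reverse" using single by (cases "kind x") auto
    then have "lift t = aff (arc_flip i) (arc_const i) t"
      by (elim disjE) (use lift single scaled h_neq_0 in \<open>simp_all add: aff_def arc_flip_def arc_const_def field_simps\<close>)
    moreover have "regular t" using slot single scaled t01  by (auto simp: regular_def)
    ultimately show ?thesis by simp
  next
    case (left x)
    have scaled: "real x < t * h" "t * h < real x + cut x"
      using t left by (auto simp: divide_h_less_iff less_divide_h_iff)
    then have slot: "slot t = x" "offset t = t * h - x" using slot_eq cut_lt1[of x] by auto
    have lift: "lift t = (real (target x) + slot_map (kind x) (cut x) (t * h - x)) / h"
      unfolding lift_def slot ..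
    have "kind x = Rotate \<or> kind x = Reflect" using left by (cases "kind x") auto
    then have "lift t = aff (arc_flip i) (arc_const i) t"
      by (elim disjE) (use lift left scaled h_neq_0 in \<open>simp_all add: aff_def arc_flip_def arc_const_def field_simps\<close>)
    moreover have "regular t" using slot left scaled t01  by (auto simp: regular_def)
    ultimately show ?thesis by simp
  next
    case (right x)
    have scaled: "real x + cut x < t * h" "t * h < real x + 1"
      using t right by (auto simp: divide_h_less_iff less_divide_h_iff)
    then have slot: "slot t = x" "offset t = t * h - x" using slot_eq cut_pos[of x] by auto
    have lift: "lift t = (real (target x) + slot_map (kind x) (cut x) (t * h - x)) / h"
      unfolding lift_def slot ..
    have "kind x = Rotate \<or> kind x = Reflect" using right by (cases "kind x") auto
    then have "lift t = aff (arc_flip i) (arc_const i) t"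
      by (elim disjE) (use lift right scaled h_neq_0 in \<open>simp_all add: aff_def arc_flip_def arc_const_def field_simps\<close>)
    moreover have "regular t" using slot right scaled t01 cut_pos[of x] by (auto simp: regular_def)
    ultimately show ?thesis by simp
  qed (use i(2) in simp)
  then show "lift t = aff (arc_flip i) (arc_const i) t" "regular t" by auto
qed

text \<open>On the merged arc \<open>(1/h, 3/h)\<close> the two reversed slots form one reflection; only the
  midpoint \<open>2/h\<close>, where the slot boundary lies, fails to be regular.\<close>
lemma lift_on_merged_arc:
  assumes "merged" and t: "1 / h < t" "t < 3 / h"
  shows "circ (lift t) = circ (aff (arc_flip (1,0)) (arc_const (1,0)) t)" "regular t \<or> t = 2 / h"
proof -
  have scaled: "1 < t * h" "t * h < 3" using t by (auto simp: divide_h_less_iff less_divide_h_iff)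
  have "(3::real) \<le> h" using h3 by simp
  then have "0 < t * h" "t * h < 1 * h" using scaled by linarith+
  then have t01: "0 \<le> t" "t < 1" using h_pos by (auto simp: zero_less_mult_iff)
  have kinds: "kind 1 = Reverse" "kind 2 = Reverse" using merged_ok \<open>merged\<close> by auto
  have aff: "aff (arc_flip (1,0)) (arc_const (1,0)) t = (real (target 1) + 2) / h - t"
    using kinds h_neq_0 by (simp add: aff_def arc_flip_def arc_const_def field_simps)
  have "circ (lift t) = circ (aff (arc_flip (1,0)) (arc_const (1,0)) t) \<and> (regular t \<or> t = 2 / h)"
  proof (cases "t * h < 2")
    case True
    then have slot1: "slot t = 1" "offset t = t * h - 1" using slot_eq[of 1 t] scaled by auto
    then have "lift t = (real (target 1) + 2) / h - t"
      using kinds h_neq_0 by (simp add: lift_def field_simps)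
    moreover have "regular t" using slot1 kinds t01 scaled by (simp add: regular_def)
    ultimately show ?thesis using aff by simp
  next
    case False
    then have slot2: "slot t = 2" "offset t = t * h - 2" using slot_eq[of 2 t] scaled by auto
    then have lift: "lift t = (real (target 2) + 3) / h - t"
      using kinds h_neq_0 by (simp add: lift_def field_simps)
    have "lift t = aff (arc_flip (1,0)) (arc_const (1,0)) t \<or>
        lift t = aff (arc_flip (1,0)) (arc_const (1,0)) t + of_int 1"
    proof (cases "target 1 = target 2 + 1")
      case True
      then have "real (target 1) = real (target 2) + 1" by simp
      then show ?thesis using aff lift by (simp add: add_divide_distrib)
    next
      case False
      then have "target 2 + 1 = h" "target 1 = 0" using merged_target \<open>merged\<close> by auto
      then have wrap: "real (target 2) + 1 = real h" "real (target 1) = 0" by (metis of_nat_1 of_nat_add, simp)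
      have "lift t = (real (target 2) + 1 + 2) / h - t" using lift by simp
      also have "\<dots> = 1 + 2 / h - t" using wrap(1) h_neq_0 by (simp add: add_divide_distrib)
      also have "\<dots> = aff (arc_flip (1,0)) (arc_const (1,0)) t + of_int 1" using aff wrap(2) by simp
      finally show ?thesis by blast
    qed
    then have "circ (lift t) = circ (aff (arc_flip (1,0)) (arc_const (1,0)) t)"
      using circ_add_int by metis
    moreover have "regular t \<or> t = 2 / h"
      using slot2 kinds t01 False h_neq_0 by (auto simp: regular_def field_simps)
    ultimately show ?thesis by blast
  qed
  then show "circ (lift t) = circ (aff (arc_flip (1,0)) (arc_const (1,0)) t)" "regular t \<or> t = 2 / h"
    by auto
qed

lemma lift_on_arc:
  assumes i: "i \<in> Arcs" and t: "arc_lo i < t" "t < arc_hi i"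
  shows "circ (lift t) = circ (aff (arc_flip i) (arc_const i) t)"
    and "regular t \<or> (merged \<and> i = (1,0) \<and> t = 2 / h)"
proof -
  have "circ (lift t) = circ (aff (arc_flip i) (arc_const i) t) \<and> (regular t \<or> (merged \<and> i = (1,0) \<and> t = 2 / h))"
  proof (cases "merged \<and> i = (1,0)")
    case True
    then have "1 / h < t" "t < 3 / h" using t arc_hi_merged by (auto simp: arc_lo_def)
    then show ?thesis using lift_on_merged_arc True by blast
  next
    case False
    then show ?thesis using lift_on_unmerged_arc[OF i False t] by simp
  qed
  then show "circ (lift t) = circ (aff (arc_flip i) (arc_const i) t)"
    and "regular t \<or> (merged \<and> i = (1,0) \<and> t = 2 / h)" by auto
qed

lemma regular_in_arc:
  assumes g: "regular t"
  shows "\<exists>i\<in>Arcs. arc_lo i < t \<and> t < arc_hi i"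
proof -
  define x where "x = slot t"
  have t: "0 \<le> t" "t < 1" "0 < offset t" "pieces (kind x) = 2 \<longrightarrow> offset t \<noteq> cut x"
    using g by (auto simp: regular_def x_def)
  have xh: "x < h" using slot_lt t x_def by auto
  have o1: "offset t < 1" using offset_range t by auto
  have scaled: "t * h = real x + offset t" using slot_offset t x_def by auto
  show ?thesis
  proof (cases "merged \<and> (x = 1 \<or> x = 2)")
    case True
    have ty1: "kind 1 = Reverse" using merged_ok True by blast
    have "(1,0) \<in> Arcs" using merged_arc_in_Arcs True by blast
    moreover have "arc_lo (1,0) < t" "t < arc_hi (1,0)" using True scaled t o1 ty1 arc_hi_merged by (auto simp: arc_lo_def divide_h_less_iff less_divide_h_iff)
    ultimately show ?thesis by blast
  next
    case nd: False
    show ?thesis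
    proof (cases "pieces (kind x) = 2")
      case True
      show ?thesis
      proof (cases "offset t < cut x")
        case True
        have "(x,0) \<in> Arcs" using xh \<open>pieces (kind x) = 2\<close> nd by (simp add: Arcs_def)
        moreover have "arc_lo (x,0) < t" "t < arc_hi (x,0)" using True scaled t \<open>pieces (kind x) = 2\<close>
          by (auto simp: arc_lo_def arc_hi_def divide_h_less_iff less_divide_h_iff)
        ultimately show ?thesis by blast
      next
        case False
        then have "cut x < offset t" using t \<open>pieces (kind x) = 2\<close> by auto
        have "(x,1) \<in> Arcs" using xh \<open>pieces (kind x) = 2\<close> nd by (simp add: Arcs_def)
        moreover have "arc_lo (x,1) < t" "t < arc_hi (x,1)" using \<open>cut x < offset t\<close> scaled t o1
          by (auto simp: arc_lo_def arc_hi_def divide_h_less_iff less_divide_h_iff)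
        ultimately show ?thesis by blast
      qed
    next
      case False
      have "(x,0) \<in> Arcs" using xh nd pieces_pos[of "kind x"] by (simp add: Arcs_def)
      moreover have "arc_lo (x,0) < t" "t < arc_hi (x,0)" using False scaled t o1 nd
        by (auto simp: arc_lo_def arc_hi_def divide_h_less_iff less_divide_h_iff)
      ultimately show ?thesis by blast
    qed
  qed
qed

lemma lift_merged_midpoint:
  assumes "merged"
  shows "lift (2 / h) = (real (target 2) + 1) / h"
proof -
  have "slot (2 / h) = 2" "offset (2 / h) = 0" using slot_eq[of 2 "2 / h"] h_neq_0 by auto
  moreover have "kind 2 = Reverse" using merged_ok assms by blast
  ultimately show ?thesis by (simp add: lift_def)
qed

lemma arc_maps_inj:
  assumes i: "i \<in> Arcs" "arc_lo i < t" "t < arc_hi i" and j: "j \<in> Arcs" "arc_lo j < t'" "t' < arc_hi j"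
    and eq: "circ (aff (arc_flip i) (arc_const i) t) = circ (aff (arc_flip j) (arc_const j) t')"
  shows "t = t'"
proof -
  have lift_eq: "circ (lift t) = circ (lift t')" using eq lift_on_arc(1)[OF i] lift_on_arc(1)[OF j] by simp
  have midpoint: False
    if u: "regular u" and "merged" and eq_mid: "circ (lift u) = circ (lift (2 / h))" for u
  proof -
    obtain m :: int where "lift u = lift (2 / h) + of_int m" using eq_mid circ_eq_iff by blast
    then have "lift u * h = real (target 2) + 1 + of_int m * h"
      using lift_merged_midpoint[OF \<open>merged\<close>] h_neq_0 by (simp add: field_simps)
    then have "lift u * h = of_int (int (target 2) + 1 + m * int h)" by simp
    then show False using of_int_not_between regular_lift[OF u] by blast
  qed
  show ?thesis
    using lift_on_arc(2)[OF i] lift_on_arc(2)[OF j]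
  proof (elim disjE)
    assume "regular t" "regular t'" then show ?thesis using lift_inj lift_eq by blast
  next
    assume "regular t" "merged \<and> j = (1,0) \<and> t' = 2 / h" then show ?thesis using midpoint lift_eq by blast
  next
    assume "merged \<and> i = (1,0) \<and> t = 2 / h" "regular t'" then show ?thesis using midpoint lift_eq by metis
  next
    assume "merged \<and> i = (1,0) \<and> t = 2 / h" "merged \<and> j = (1,0) \<and> t' = 2 / h" then show ?thesis by simp
  qed
qed

lemma arc_right_end_value:
  assumes p: "p < h" "\<not> (merged \<and> p = 2)" "\<not> (merged \<and> p = 1)"
  shows "(p, pieces (kind p) - 1) \<in> Arcs" "arc_hi (p, pieces (kind p) - 1) = (real p + 1) / h"
    "aff (arc_flip (p, pieces (kind p) - 1)) (arc_const (p, pieces (kind p) - 1)) ((real p + 1) / h) = (real (target p) + slot_map_right (kind p) (cut p)) / h"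
proof -
  show "(p, pieces (kind p) - 1) \<in> Arcs" using p pieces_pos[of "kind p"] by (simp add: Arcs_def)
  show "arc_hi (p, pieces (kind p) - 1) = (real p + 1) / h" using p by (cases "kind p") (auto simp: arc_hi_def)
  show "aff (arc_flip (p, pieces (kind p) - 1)) (arc_const (p, pieces (kind p) - 1)) ((real p + 1) / h) = (real (target p) + slot_map_right (kind p) (cut p)) / h"
    using h_neq_0 by (cases "kind p") (auto simp: aff_def arc_flip_def arc_const_def field_simps)
qed

lemma merged_arc_right_end_value:
  assumes "merged"
  shows "arc_hi (1,0) = 3 / h" "circ (aff (arc_flip (1,0)) (arc_const (1,0)) (3 / h)) = circ ((real (target 2) + slot_map_right (kind 2) (cut 2)) / h)"
proof -
  have kind: "kind 1 = Reverse" "kind 2 = Reverse" using merged_ok assms by auto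
  show "arc_hi (1,0) = 3 / h" using arc_hi_merged assms by simp
  have a: "aff (arc_flip (1,0)) (arc_const (1,0)) (3 / h) = (real (target 1) - 1) / h"
    using kind h_neq_0 by (simp add: aff_def arc_flip_def arc_const_def field_simps)
  show "circ (aff (arc_flip (1,0)) (arc_const (1,0)) (3 / h)) = circ ((real (target 2) + slot_map_right (kind 2) (cut 2)) / h)"
  proof (cases "target 1 = target 2 + 1")
    case True
    then show ?thesis using a kind by simp
  next
    case False
    then have "target 2 + 1 = h" "target 1 = 0" using merged_target assms by auto
    then have r: "real (target 2) = real h - 1" "real (target 1) = 0" by linarith+
    have "(real (target 1) - 1) / h = (real (target 2) + slot_map_right (kind 2) (cut 2)) / h + of_int (-1)"
      using r kind h_neq_0 by (simp add: field_simps)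
    then show ?thesis using a circ_add_int by metis
  qed
qed

lemma arc_left_end_value:
  assumes y: "y < h" "\<not> (merged \<and> y = 2)"
  shows "(y, 0) \<in> Arcs" "arc_lo (y,0) = real y / h"
    "aff (arc_flip (y,0)) (arc_const (y,0)) (real y / h) = (real (target y) + slot_map_left (kind y) (cut y)) / h"
proof -
  show "(y, 0) \<in> Arcs" using y pieces_pos[of "kind y"] by (simp add: Arcs_def)
  show "arc_lo (y,0) = real y / h" by (simp add: arc_lo_def)
  show "aff (arc_flip (y,0)) (arc_const (y,0)) (real y / h) = (real (target y) + slot_map_left (kind y) (cut y)) / h"
    using h_neq_0 by (cases "kind y") (auto simp: aff_def arc_flip_def arc_const_def field_simps)
qed

definition arc_at :: "real \<Rightarrow> nat \<times> nat" where
  "arc_at t = (if merged \<and> (slot t = 1 \<or> slot t = 2) then (1,0)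
           else (slot t, if pieces (kind (slot t)) = 2 \<and> cut (slot t) < offset t then 1 else 0))"

lemma arc_at_eq:
  assumes i: "i \<in> Arcs" and t: "arc_lo i < t" "t < arc_hi i"
  shows "arc_at t = i"
  using i
proof (cases rule: Arcs_cases)
  case (single x)
  have scaled: "real x < t * h" "t * h < real x + 1" using t single by (auto simp: divide_h_less_iff less_divide_h_iff)
  have slot: "slot t = x" using slot_eq scaled by auto
  have "\<not> (merged \<and> (x = 1 \<or> x = 2))" using single by auto
  then show ?thesis using slot single by (auto simp: arc_at_def)
next
  case (left x)
  have scaled: "real x < t * h" "t * h < real x + cut x" using t left by (auto simp: divide_h_less_iff less_divide_h_iff)
  have slot: "slot t = x" "offset t = t * h - x" using slot_eq scaled cut_lt1[of x] by auto
  have "\<not> (merged \<and> (x = 1 \<or> x = 2))" using left merged_ok by auto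
  then show ?thesis using slot left scaled by (auto simp: arc_at_def)
next
  case (right x)
  have scaled: "real x + cut x < t * h" "t * h < real x + 1" using t right by (auto simp: divide_h_less_iff less_divide_h_iff)
  have slot: "slot t = x" "offset t = t * h - x" using slot_eq scaled cut_pos[of x] by auto
  have "\<not> (merged \<and> (x = 1 \<or> x = 2))" using right merged_ok by auto
  then show ?thesis using slot right scaled by (auto simp: arc_at_def)
next
  case merged_arc
  have scaled: "1 < t * h" "t * h < 3" using t merged_arc by (auto simp: divide_h_less_iff less_divide_h_iff)
  have "slot t = 1 \<or> slot t = 2"
  proof (cases "t * h < 2")
    case True then show ?thesis using slot_eq[of 1 t] scaled by auto
  next
    case False then show ?thesis using slot_eq[of 2 t] scaled by auto
  qed
  then show ?thesis unfolding arc_at_def using merged_arc by auto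
qed

lemma circ_step_ne: "circ ((real N + 1) / h) \<noteq> circ (real N / h)"
proof
  assume "circ ((real N + 1) / h) = circ (real N / h)"
  then obtain m :: int where m: "(real N + 1) / h = real N / h + of_int m" using circ_eq_iff by blast
  then have e: "1 / real h = of_int m" using h_neq_0 by (simp add: field_simps)
  moreover have "0 < 1 / real h" "1 / real h < 1" using h3 h_pos by auto
  ultimately have "0 < m" "m < 1" by simp_all
  then show False by simp
qed

lemma not_regular_cases:
  assumes "0 \<le> x" "x < 1" "\<not> regular x"
  shows "offset x = 0 \<or> (pieces (kind (slot x)) = 2 \<and> offset x = cut (slot x))"
  using assms offset_range[of x] by (auto simp: regular_def)

lemma jump_at_cut:
  assumes y: "y < h" "pieces (kind y) = 2"
  defines "x \<equiv> (real y + cut y) / h"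
  shows "(y,0) \<in> Arcs \<and> (y,1) \<in> Arcs \<and> arc_hi (y,0) = x \<and> arc_lo (y,1) = x \<and>
    circ (aff (arc_flip (y,0)) (arc_const (y,0)) x) \<noteq> circ (aff (arc_flip (y,1)) (arc_const (y,1)) x)"
proof -
  have "\<not> (merged \<and> y = 2)" using y merged_ok by auto
  then have arcs: "(y,0) \<in> Arcs" "(y,1) \<in> Arcs" using y by (auto simp: Arcs_def)
  have "kind y = Rotate \<or> kind y = Reflect" using y by (cases "kind y") auto
  then have "circ (aff (arc_flip (y,0)) (arc_const (y,0)) x) \<noteq> circ (aff (arc_flip (y,1)) (arc_const (y,1)) x)"
  proof
    assume "kind y = Rotate"
    then have "aff (arc_flip (y,0)) (arc_const (y,0)) x = (real (target y) + 1) / h"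
        "aff (arc_flip (y,1)) (arc_const (y,1)) x = real (target y) / h"
      using h_neq_0 by (auto simp: x_def aff_def arc_flip_def arc_const_def field_simps)
    then show ?thesis using circ_step_ne by simp
  next
    assume "kind y = Reflect"
    then have "aff (arc_flip (y,0)) (arc_const (y,0)) x = real (target y) / h"
        "aff (arc_flip (y,1)) (arc_const (y,1)) x = (real (target y) + 1) / h"
      using h_neq_0 by (auto simp: x_def aff_def arc_flip_def arc_const_def field_simps)
    then show ?thesis using circ_step_ne[of "target y"] by auto
  qed
  then show ?thesis using arcs y by (auto simp: x_def arc_lo_def arc_hi_def)
qed

lemma jump_at_slot_boundary:
  assumes y: "y < h" "\<not> (merged \<and> y = 2)"
  shows "\<exists>i\<in>Arcs. (arc_hi i = real y / h \<or> (y = 0 \<and> arc_hi i = 1)) \<and>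
    circ (aff (arc_flip i) (arc_const i) (arc_hi i)) \<noteq> circ (aff (arc_flip (y,0)) (arc_const (y,0)) (real y / h))"
proof -
  define p where "p = (y + h - 1) mod h"
  have p: "p = (if y = 0 then h - 1 else y - 1)" "p < h"
    using mod_pred_eq[OF y(1)] y(1) h3 unfolding p_def by auto
  have "p \<noteq> y" using p(1) h3 by auto
  then have "target p \<noteq> target y" using target_inj p(2) y(1) by (auto simp: inj_on_def)
  then have ne: "circ ((real (target p) + slot_map_right (kind p) (cut p)) / h)
      \<noteq> circ (aff (arc_flip (y,0)) (arc_const (y,0)) (real y / h))"
    using jump_at_circ_ne[OF target_lt[OF p(2)] target_lt[OF y(1)] _ jumps[OF y, folded p_def]]
      arc_left_end_value[OF y] cut_pos cut_lt1 by auto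
  show ?thesis
  proof (cases "merged \<and> p = 2")
    case True
    then have "y = 3 \<or> (y = 0 \<and> h = 3)" using p by (auto split: if_splits)
    then show ?thesis
      using ne merged_arc_right_end_value True merged_arc_in_Arcs by (intro bexI[of _ "(1,0)"]) auto
  next
    case False
    have "\<not> (merged \<and> p = 1)" using p y h3 by (auto split: if_splits)
    note right = arc_right_end_value[OF p(2) False this]
    have "real p + 1 = (if y = 0 then real h else real y)" using p h3 by (auto simp: of_nat_diff)
    then show ?thesis
      using right ne h_neq_0 by (intro bexI[of _ "(p, pieces (kind p) - 1)"]) (auto split: if_splits)
  qed
qed

lemma jump_at_gap:
  assumes x: "0 \<le> x" "x < 1" and gap: "\<forall>i\<in>Arcs. \<not> (arc_lo i < x \<and> x < arc_hi i)"
  shows "\<exists>i\<in>Arcs. \<exists>j\<in>Arcs. (arc_hi i = x \<or> (x = 0 \<and> arc_hi i = 1)) \<and> arc_lo j = x \<and>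
           circ (aff (arc_flip i) (arc_const i) (arc_hi i)) \<noteq> circ (aff (arc_flip j) (arc_const j) (arc_lo j))"
proof -
  define y where "y = slot x"
  have y: "y < h" "x * h = real y + offset x" using slot_lt slot_offset x by (auto simp: y_def)
  have "\<not> regular x" using regular_in_arc gap by blast
  then consider "offset x = 0" | "pieces (kind y) = 2" "offset x = cut y"
    using not_regular_cases x y_def by blast
  then show ?thesis
  proof cases
    case 1
    then have x_eq: "x = real y / h" using y h_neq_0 by (simp add: field_simps)
    have "\<not> (merged \<and> y = 2)"
    proof
      assume "merged \<and> y = 2"
      then have "arc_lo (1,0) < x \<and> x < arc_hi (1,0)" "(1,0) \<in> Arcs"
        using x_eq arc_hi_merged merged_arc_in_Arcs h_pos by (auto simp: arc_lo_def divide_strict_right_mono)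
      then show False using gap by blast
    qed
    then show ?thesis
      using jump_at_slot_boundary[OF y(1)] arc_left_end_value[OF y(1)] x_eq by fastforce
  next
    case 2
    then have "x = (real y + cut y) / h" using y h_neq_0 by (simp add: field_simps)
    then show ?thesis
      using jump_at_cut[OF y(1) 2(1)] by (intro bexI[of _ "(y,0)"] bexI[of _ "(y,1)"]) auto
  qed
qed

lemma arcs_cover:
  assumes "0 \<le> t" "t \<le> 1"
  shows "\<exists>i\<in>Arcs. arc_lo i \<le> t \<and> t \<le> arc_hi i"
proof (cases "\<exists>i\<in>Arcs. arc_lo i < t \<and> t < arc_hi i")
  case False
  show ?thesis
  proof (cases "t = 1")
    case True
    have "\<forall>i\<in>Arcs. \<not> (arc_lo i < 0 \<and> 0 < arc_hi i)" using arc_bounds by fastforce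
    then obtain i where "i \<in> Arcs" "arc_hi i = 0 \<or> arc_hi i = 1" using jump_at_gap[of 0] by auto
    then show ?thesis using arc_bounds[of i] True by force
  next
    case False
    then obtain j where "j \<in> Arcs" "arc_lo j = t"
      using jump_at_gap[of t] assms \<open>\<not> (\<exists>i\<in>Arcs. arc_lo i < t \<and> t < arc_hi i)\<close> by fastforce
    then show ?thesis using arc_bounds[of j] by force
  qed
qed force

lemma finite_Arcs: "finite Arcs"
proof -
  have "Arcs \<subseteq> {..<h} \<times> {..<2}" unfolding Arcs_def using pieces_le by (auto intro: less_le_trans)
  then show ?thesis by (rule finite_subset) simp
qed

lemma card_Arcs_where:
  "card {i\<in>Arcs. P (kind (fst i))}
     = (\<Sum>x<h. if P (kind x) then pieces (kind x) else 0) - (if merged \<and> P Reverse then 1 else 0)"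
proof -
  define S where "S = (SIGMA x:{x\<in>{..<h}. P (kind x)}. {..<pieces (kind x)})"
  have arcs: "{i\<in>Arcs. P (kind (fst i))} = S - (if merged then {(2,0)} else {})"
    unfolding S_def Arcs_def using merged_ok by auto
  have "card S = (\<Sum>x\<in>{x\<in>{..<h}. P (kind x)}. pieces (kind x))"
    unfolding S_def by (subst card_SigmaI) auto
  also have "\<dots> = (\<Sum>x<h. if P (kind x) then pieces (kind x) else 0)"
    by (rule sum.inter_filter) simp
  finally have "card S = (\<Sum>x<h. if P (kind x) then pieces (kind x) else 0)" .
  moreover have "(2,0) \<in> S \<longleftrightarrow> P Reverse" if merged
    using that merged_ok h3 by (auto simp: S_def)
  moreover have "finite S" unfolding S_def by simp
  ultimately show ?thesis using arcs by (cases merged) (auto simp: card_Diff_singleton)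
qed

theorem CET_T: "CET (card Arcs) (card {i\<in>Arcs. arc_flip i}) T D"
  unfolding D_def
proof (rule CET_of_arcs[OF finite_Arcs])
  show "0 \<le> arc_lo i \<and> arc_lo i < arc_hi i \<and> arc_hi i \<le> 1" if "i \<in> Arcs" for i
    using arc_bounds[OF that] by simp
  show "{arc_lo i<..<arc_hi i} \<inter> {arc_lo j<..<arc_hi j} = {}" if "i \<in> Arcs" "j \<in> Arcs" "i \<noteq> j" for i j
    using arc_at_eq[OF that(1)] arc_at_eq[OF that(2)] that(3) by fastforce
  show "T (circ t) = circ (aff (arc_flip i) (arc_const i) t)" if "i \<in> Arcs" "arc_lo i < t" "t < arc_hi i" for i t
    using T_circ lift_on_arc(1)[OF that] arc_bounds[OF that(1)] that by simp
qed (use arcs_cover arc_maps_inj jump_at_gap in blast)+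

end

section \<open>A dense orbit\<close>

fun slot_sign :: "slot_kind \<Rightarrow> real" where
  "slot_sign Shift = 1" | "slot_sign Rotate = 1" | "slot_sign Reverse = -1" | "slot_sign Reflect = -1"

fun slot_shift :: "slot_kind \<Rightarrow> real \<Rightarrow> real" where
  "slot_shift Shift c = 0" | "slot_shift Rotate c = - c" | "slot_shift Reverse c = 0" | "slot_shift Reflect c = c"

lemma slot_map_affine:
  assumes "pieces s = 2 \<Longrightarrow> w \<noteq> c"
  shows "\<exists>m::int. slot_map s c w = slot_sign s * w + slot_shift s c + of_int m"
proof (cases s)
  case Shift then show ?thesis by (auto intro: exI[of _ 0])
next
  case Rotate then show ?thesis
    by (cases "w < c") (auto intro: exI[of _ 0] exI[of _ 1])
next
  case Reverse then show ?thesis by (auto intro: exI[of _ 1])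
next
  case Reflect then show ?thesis
    by (cases "w < c") (auto intro: exI[of _ 0] exI[of _ 1])
qed

lemma slot_sign_if: "slot_sign s = (if is_flip s then -1 else 1)" by (cases s) auto

lemma mod_add_left_inj:
  fixes j m m' h :: nat
  assumes "m < h" "m' < h" "(j + m) mod h = (j + m') mod h"
  shows "m = m'"
proof -
  have "int h dvd int m - int m'"
    using assms(3) by (metis of_nat_add mod_eq_dvd_iff zmod_int add_diff_cancel_left)
  then show ?thesis using assms(1,2) dvd_imp_le_int[of "int m - int m'" "int h"] by fastforce
qed

locale slot_dynamics = slot_cet +
  fixes \<theta> :: real and cut_slot :: nat
  assumes theta_irrational: "\<theta> \<notin> \<rat>" and theta_pos: "0 < \<theta>" and theta_lt1: "\<theta> < 1"
    and cut_eq: "\<And>x. cut x = (if x = cut_slot then \<theta> else 1/2)"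
    and cut_slot_lt: "cut_slot < h" and cut_slot_kind: "kind cut_slot = Rotate \<or> kind cut_slot = Reflect"
    and visits_all: "bij_betw (\<lambda>i. (target ^^ i) 0) {..<h} {..<h}" and cycle_closes: "(target ^^ h) 0 = 0"
    and flips_even: "even (card {x. x < h \<and> is_flip (kind x)})"
begin

definition visit :: "nat \<Rightarrow> nat" where "visit j = (target ^^ j) 0"

fun orbit_offset :: "nat \<Rightarrow> real" where
  "orbit_offset 0 = \<theta> / 3"
| "orbit_offset (Suc j) = slot_map (kind (visit j)) (cut (visit j)) (orbit_offset j)"

text \<open>Offsets \<open>(k/3) \<theta> + r\<close> with \<open>r\<close> rational and \<open>k\<close> prime to 3 are neither rational nor equal to
  \<open>\<theta>\<close>, so they avoid every cut and slot boundary, and the form is preserved by the maps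
  \<open>w \<mapsto> \<plusminus>w + q \<theta> + r\<close>: the orbit of the base point never leaves the domain.\<close>
definition generic :: "real \<Rightarrow> bool" where
  "generic w \<longleftrightarrow> (\<exists>k::int. \<exists>r\<in>\<rat>. w = of_int k / 3 * \<theta> + r \<and> \<not> 3 dvd k)"

lemma visit_Suc: "visit (Suc j) = target (visit j)" by (simp add: visit_def)

lemma visit_lt: "visit j < h"
proof (induction j)
  case 0 then show ?case using h3 by (simp add: visit_def)
next
  case (Suc j) then show ?case using target_lt by (simp add: visit_Suc)
qed

lemma visit_period: "visit (j + h) = visit j"
  by (simp add: visit_def funpow_add cycle_closes)

lemma visit_period_mult: "visit (j + h * k) = visit j"
proof (induction k)
  case 0 then show ?case by simp
next
  case (Suc k)
  have "visit (j + h * Suc k) = visit ((j + h * k) + h)" by (simp add: algebra_simps)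
  then show ?case using visit_period Suc by simp
qed

lemma generic_not_rat:
  assumes "generic w"
  shows "w \<notin> \<rat>"
proof
  assume w: "w \<in> \<rat>"
  obtain k :: int and r where kr: "r \<in> \<rat>" "w = of_int k / 3 * \<theta> + r" "\<not> 3 dvd k"
    using assms unfolding generic_def by blast
  have k0: "of_int k / 3 \<noteq> (0::real)" using kr(3) by auto
  have "\<theta> = (w - r) / (of_int k / 3)" using kr k0 by (simp add: field_simps)
  moreover have "(w - r) / (of_int k / 3) \<in> \<rat>" using w kr(1) by (intro Rats_divide Rats_diff) auto
  ultimately show False using theta_irrational by simp
qed

lemma generic_ne_theta:
  assumes "generic w"
  shows "w \<noteq> \<theta>"
proof
  assume w: "w = \<theta>"
  obtain k :: int and r where kr: "r \<in> \<rat>" "w = of_int k / 3 * \<theta> + r" "\<not> 3 dvd k"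
    using assms unfolding generic_def by blast
  have k0: "of_int k / 3 - 1 \<noteq> (0::real)"
  proof
    assume "of_int k / 3 - 1 = (0::real)"
    then have "of_int k = (3::real)" by simp
    then have "k = 3" by (metis of_int_eq_numeral_iff)
    then show False using kr(3) by simp
  qed
  have "\<theta> = - r / (of_int k / 3 - 1)" using kr w k0 by (simp add: field_simps)
  moreover have "- r / (of_int k / 3 - 1) \<in> \<rat>" using kr(1) by (intro Rats_divide Rats_minus_iff[THEN iffD2] Rats_diff) auto
  ultimately show False using theta_irrational by simp
qed

lemma generic_ne_cut:
  assumes "generic w"
  shows "w \<noteq> cut x"
proof (cases "x = cut_slot")
  case True then show ?thesis using generic_ne_theta assms by (simp add: cut_eq)
next
  case False
  have "(1/2::real) \<in> \<rat>" by simp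
  moreover have "w \<notin> \<rat>" using generic_not_rat assms by blast
  ultimately have "w \<noteq> 1/2" by metis
  then show ?thesis using False by (simp add: cut_eq)
qed

lemma generic_affine:
  assumes g: "generic w" and e: "e = 1 \<or> e = -1" and q: "d = of_int q * \<theta> + r" "r \<in> \<rat>"
  shows "generic (e * w + d + of_int m)"
proof -
  obtain k :: int and r0 where kr: "r0 \<in> \<rat>" "w = of_int k / 3 * \<theta> + r0" "\<not> 3 dvd k"
    using g unfolding generic_def by blast
  from e show ?thesis
  proof
    assume e1: "e = 1"
    have "e * w + d + of_int m = of_int (k + 3 * q) / 3 * \<theta> + (r0 + r + of_int m)"
      using e1 kr q by (simp add: field_simps)
    moreover have "r0 + r + of_int m \<in> \<rat>" using kr(1) q(2) by auto
    moreover have "\<not> 3 dvd (k + 3 * q)" using kr(3) by presburger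
    ultimately show ?thesis unfolding generic_def by blast
  next
    assume e1: "e = -1"
    have "e * w + d + of_int m = of_int (- k + 3 * q) / 3 * \<theta> + (- r0 + r + of_int m)"
      using e1 kr q by (simp add: field_simps)
    moreover have "- r0 + r + of_int m \<in> \<rat>" using kr(1) q(2) by auto
    moreover have "\<not> 3 dvd (- k + 3 * q)" using kr(3) by presburger
    ultimately show ?thesis unfolding generic_def by blast
  qed
qed

lemma slot_shift_form: "\<exists>q::int. \<exists>r\<in>\<rat>. slot_shift s (cut x) = of_int q * \<theta> + r"
proof -
  have "\<exists>q::int. \<exists>r\<in>\<rat>. cut x = of_int q * \<theta> + r"
  proof (cases "x = cut_slot")
    case True then show ?thesis by (intro exI[of _ 1] bexI[of _ 0]) (auto simp: cut_eq)
  next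
    case False then show ?thesis by (intro exI[of _ 0] bexI[of _ "1/2"]) (auto simp: cut_eq)
  qed
  then obtain q :: int and r where qr: "r \<in> \<rat>" "cut x = of_int q * \<theta> + r" by blast
  show ?thesis
  proof (cases s)
    case Shift then show ?thesis by (auto intro!: exI[of _ 0])
  next
    case Rotate then show ?thesis using qr by (intro exI[of _ "-q"] bexI[of _ "-r"]) auto
  next
    case Reverse then show ?thesis by (auto intro!: exI[of _ 0])
  next
    case Reflect then show ?thesis using qr by (intro exI[of _ q] bexI[of _ r]) auto
  qed
qed

lemma slot_sign_cases: "slot_sign s = 1 \<or> slot_sign s = -1" by (cases s) auto

lemma orbit_offset_generic: "generic (orbit_offset j) \<and> 0 < orbit_offset j \<and> orbit_offset j < 1"
proof (induction j)
  case 0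
  have "generic (\<theta> / 3)" unfolding generic_def by (intro exI[of _ 1] bexI[of _ 0]) auto
  then show ?case using theta_pos theta_lt1 by simp
next
  case (Suc j)
  let ?s = "kind (visit j)" and ?c = "cut (visit j)"
  have ne: "orbit_offset j \<noteq> ?c" using generic_ne_cut Suc by blast
  obtain m :: int where m: "slot_map ?s ?c (orbit_offset j) = slot_sign ?s * orbit_offset j + slot_shift ?s ?c + of_int m"
    using slot_map_affine ne by blast
  obtain q :: int and r where qr: "r \<in> \<rat>" "slot_shift ?s ?c = of_int q * \<theta> + r" using slot_shift_form by blast
  have "generic (slot_map ?s ?c (orbit_offset j))" unfolding m using generic_affine[OF _ slot_sign_cases qr(2,1)] Suc by blast
  moreover have "0 < slot_map ?s ?c (orbit_offset j) \<and> slot_map ?s ?c (orbit_offset j) < 1"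
    using slot_map_range[of "orbit_offset j" ?c ?s] Suc ne cut_pos cut_lt1 by auto
  ultimately show ?case by simp
qed

lemma orbit_offset_props: "generic (orbit_offset j)" "0 < orbit_offset j" "orbit_offset j < 1"
  using orbit_offset_generic by auto

definition base_point :: complex where
  "base_point = circ (\<theta> / (3 * h))"

lemma T_slot_step:
  assumes "x < h" "0 < w" "w < 1"
  shows "T (circ ((real x + w) / h)) = circ ((real (target x) + slot_map (kind x) (cut x) w) / h)"
  using T_circ slot_point[OF assms] by (simp add: lift_def)

lemma orbit_base_point: "(T ^^ j) base_point = circ ((real (visit j) + orbit_offset j) / h)"
proof (induction j)
  case 0 then show ?case by (simp add: base_point_def visit_def)
next
  case (Suc j)
  have "(T ^^ Suc j) base_point = T (circ ((real (visit j) + orbit_offset j) / h))" using Suc by simp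
  also have "\<dots> = circ ((real (visit (Suc j)) + orbit_offset (Suc j)) / h)"
    using T_slot_step[OF visit_lt orbit_offset_props(2,3)] by (simp add: visit_Suc)
  finally show ?case .
qed

lemma orbit_in_D: "(T ^^ j) base_point \<in> D"
proof -
  let ?t = "(real (visit j) + orbit_offset j) / h"
  note t = slot_point[OF visit_lt orbit_offset_props(2,3)]
  have "regular ?t" using t orbit_offset_props generic_ne_cut by (simp add: regular_def)
  then obtain i where "i \<in> Arcs" "arc_lo i < ?t" "?t < arc_hi i" using regular_in_arc by blast
  then have "circ ?t \<in> D" unfolding D_def by (intro UN_I[of i]) auto
  then show ?thesis using orbit_base_point by simp
qed

lemma orbit_base_point_in_orbit: "(T ^^ j) base_point \<in> orbit T D base_point"
proof -
  have "in_dom_iter T D j base_point" unfolding in_dom_iter_def using orbit_in_D by blast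
  then show ?thesis unfolding orbit_def by blast
qed

text \<open>The translation part of the isometry of \<open>\<real>/\<int>\<close> carrying the offset at step \<open>j\<close> to the
  offset at step \<open>j + L\<close>.\<close>
fun cycle_shift :: "nat \<Rightarrow> nat \<Rightarrow> real" where
  "cycle_shift j 0 = 0"
| "cycle_shift j (Suc L) = slot_sign (kind (visit (j + L))) * cycle_shift j L + slot_shift (kind (visit (j + L))) (cut (visit (j + L)))"

lemma orbit_offset_window: "\<exists>m::int. orbit_offset (j + L) = (\<Prod>i<L. slot_sign (kind (visit (j + i)))) * orbit_offset j + cycle_shift j L + of_int m"
proof (induction L)
  case 0 then show ?case by (auto intro: exI[of _ 0])
next
  case (Suc L)
  then obtain m :: int where m: "orbit_offset (j + L) = (\<Prod>i<L. slot_sign (kind (visit (j + i)))) * orbit_offset j + cycle_shift j L + of_int m" by blast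
  let ?s = "kind (visit (j + L))" and ?c = "cut (visit (j + L))"
  have ne: "orbit_offset (j + L) \<noteq> ?c" using generic_ne_cut orbit_offset_props by blast
  obtain m1 :: int where m1: "slot_map ?s ?c (orbit_offset (j + L)) = slot_sign ?s * orbit_offset (j + L) + slot_shift ?s ?c + of_int m1"
    using slot_map_affine ne by blast
  have "\<exists>m2::int. slot_sign ?s * of_int m = of_int m2" using slot_sign_cases[of ?s]
    by (elim disjE) (auto intro!: exI[of _ m] exI[of _ "-m"])
  then obtain m2 :: int where m2: "slot_sign ?s * of_int m = of_int m2" by blast
  have "orbit_offset (j + Suc L) = slot_map ?s ?c (orbit_offset (j + L))" by simp
  also have "\<dots> = slot_sign ?s * ((\<Prod>i<L. slot_sign (kind (visit (j + i)))) * orbit_offset j + cycle_shift j L + of_int m) + slot_shift ?s ?c + of_int m1"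
    using m1 m by simp
  also have "\<dots> = (\<Prod>i<Suc L. slot_sign (kind (visit (j + i)))) * orbit_offset j + cycle_shift j (Suc L) + of_int (m2 + m1)"
    using m2 by (simp add: algebra_simps)
  finally show ?case by blast
qed

lemma visit_shift_inj: "inj_on (\<lambda>m. visit (j + m)) {..<h}"
proof (rule inj_onI)
  fix m m' assume mm: "m \<in> {..<h}" "m' \<in> {..<h}" "visit (j + m) = visit (j + m')"
  have per: "visit n = visit (n mod h)" for n
    using visit_period_mult[of "n mod h" "n div h"] by simp
  have "visit ((j + m) mod h) = visit ((j + m') mod h)" using mm(3) per[of "j + m"] per[of "j + m'"] by simp
  moreover have "(j + m) mod h < h" "(j + m') mod h < h" using h3 by auto
  ultimately have "(j + m) mod h = (j + m') mod h" using visits_all unfolding bij_betw_def inj_on_def visit_def by blast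
  then show "m = m'" using mod_add_left_inj mm by auto
qed

lemma visit_shift_bij: "bij_betw (\<lambda>m. visit (j + m)) {..<h} {..<h}"
proof -
  have inj: "inj_on (\<lambda>m. visit (j + m)) {..<h}" by (rule visit_shift_inj)
  have sub: "(\<lambda>m. visit (j + m)) ` {..<h} \<subseteq> {..<h}" using visit_lt by auto
  have "card ((\<lambda>m. visit (j + m)) ` {..<h}) = h" using card_image[OF inj] by simp
  then have "(\<lambda>m. visit (j + m)) ` {..<h} = {..<h}" using sub by (simp add: card_subset_eq)
  then show ?thesis using inj by (simp add: bij_betw_def)
qed

lemma cycle_sign_product: "(\<Prod>i<h. slot_sign (kind (visit (j + i)))) = 1"
proof -
  have "(\<Prod>i<h. slot_sign (kind (visit (j + i)))) = (\<Prod>x<h. slot_sign (kind x))"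
    using prod.reindex_bij_betw[OF visit_shift_bij[of j], of "\<lambda>x. slot_sign (kind x)"] by simp
  also have "\<dots> = (\<Prod>x<h. if is_flip (kind x) then -1 else 1)" by (simp add: slot_sign_if)
  also have "\<dots> = (-1) ^ card ({..<h} \<inter> {x. is_flip (kind x)})"
    by (simp add: prod.If_cases)
  also have "{..<h} \<inter> {x. is_flip (kind x)} = {x. x < h \<and> is_flip (kind x)}" by auto
  finally show ?thesis using flips_even by simp
qed

lemma cycle_shift_period: "cycle_shift (j + h * k) L = cycle_shift j L"
proof (induction L)
  case 0 then show ?case by simp
next
  case (Suc L)
  have "visit (j + h * k + L) = visit (j + L)" using visit_period_mult[of "j + L" k] by (simp add: algebra_simps)
  then show ?case using Suc by simp
qed

lemma cycle_shift_form:
  assumes "L \<le> h"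
  shows "\<exists>q::int. \<exists>r\<in>\<rat>. cycle_shift j L = of_int q * \<theta> + r \<and> (q = 1 \<or> q = -1 \<or> q = 0) \<and>
            (q \<noteq> 0 \<longleftrightarrow> (\<exists>m<L. visit (j + m) = cut_slot))"
  using assms
proof (induction L)
  case 0 then show ?case by (auto intro!: exI[of _ 0] bexI[of _ 0])
next
  case (Suc L)
  then obtain q :: int and r where qr: "r \<in> \<rat>" "cycle_shift j L = of_int q * \<theta> + r" "q = 1 \<or> q = -1 \<or> q = 0"
      "q \<noteq> 0 \<longleftrightarrow> (\<exists>m<L. visit (j + m) = cut_slot)" by auto
  let ?x = "visit (j + L)"
  let ?e = "slot_sign (kind ?x)"
  have e: "?e = 1 \<or> ?e = -1" by (rule slot_sign_cases)
  have "\<exists>qe::int. ?e = of_int qe \<and> (qe = 1 \<or> qe = -1)" using e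
    by (elim disjE) (auto intro!: exI[of _ 1] exI[of _ "-1"])
  then obtain qe :: int where qe: "?e = of_int qe" "qe = 1 \<or> qe = -1" by blast
  show ?case
  proof (cases "?x = cut_slot")
    case True
    have "\<not> (\<exists>m<L. visit (j + m) = cut_slot)"
    proof
      assume "\<exists>m<L. visit (j + m) = cut_slot"
      then obtain m where "m < L" "visit (j + m) = visit (j + L)" using True by auto
      then show False using visit_shift_inj[of j] Suc.prems unfolding inj_on_def by fastforce
    qed
    then have q0: "q = 0" using qr(4) by blast
    have "kind ?x = Rotate \<or> kind ?x = Reflect" using cut_slot_kind True by simp
    then obtain \<sigma> :: int where \<sigma>: "\<sigma> = 1 \<or> \<sigma> = -1" "slot_shift (kind ?x) (cut ?x) = of_int \<sigma> * \<theta>"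
      using True by (elim disjE) (auto simp: cut_eq intro: that[of "-1"] that[of 1])
    have "cycle_shift j (Suc L) = of_int \<sigma> * \<theta> + ?e * r" using \<sigma> q0 qr(2) by simp
    moreover have "?e * r \<in> \<rat>" using qr(1) qe by simp
    ultimately show ?thesis using True \<sigma>(1) by (intro exI[of _ \<sigma>] bexI[of _ "?e * r"]) auto
  next
    case False
    have csx: "cut ?x = 1/2" using False by (simp add: cut_eq)
    have hr: "(1/2::real) \<in> \<rat>" by simp
    have dr: "slot_shift (kind ?x) (cut ?x) \<in> \<rat>" unfolding csx using hr by (cases "kind ?x") auto
    have "cycle_shift j (Suc L) = of_int (qe * q) * \<theta> + (?e * r + slot_shift (kind ?x) (cut ?x))"
      using qr(2) qe(1) by (simp add: algebra_simps)
    moreover have "?e * r + slot_shift (kind ?x) (cut ?x) \<in> \<rat>" using qr(1) dr qe by simp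
    moreover have "qe * q = 1 \<or> qe * q = -1 \<or> qe * q = 0" using qe(2) qr(3) by auto
    moreover have "qe * q \<noteq> 0 \<longleftrightarrow> (\<exists>m<Suc L. visit (j + m) = cut_slot)"
      using qr(4) qe(2) False less_Suc_eq by auto
    ultimately show ?thesis by blast
  qed
qed

lemma cycle_shift_irrational: "cycle_shift j h \<notin> \<rat>"
proof
  assume D: "cycle_shift j h \<in> \<rat>"
  obtain q :: int and r where qr: "r \<in> \<rat>" "cycle_shift j h = of_int q * \<theta> + r" "q = 1 \<or> q = -1 \<or> q = 0"
      "q \<noteq> 0 \<longleftrightarrow> (\<exists>m<h. visit (j + m) = cut_slot)" using cycle_shift_form[of h j] by auto
  have "cut_slot \<in> (\<lambda>m. visit (j + m)) ` {..<h}" using visit_shift_bij[of j] cut_slot_lt by (simp add: bij_betw_def)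
  then have "\<exists>m<h. visit (j + m) = cut_slot" by auto
  then have "q = 1 \<or> q = -1" using qr by auto
  then have "\<theta> = (cycle_shift j h - r) / of_int q" using qr(2) by auto
  moreover have "(cycle_shift j h - r) / of_int q \<in> \<rat>" using D qr(1) by (intro Rats_divide Rats_diff) auto
  ultimately show False using theta_irrational by simp
qed

lemma orbit_offset_cycles: "\<exists>m::int. orbit_offset (j + h * k) = orbit_offset j + real k * cycle_shift j h + of_int m"
proof (induction k)
  case 0 then show ?case by (auto intro: exI[of _ 0])
next
  case (Suc k)
  then obtain m :: int where m: "orbit_offset (j + h * k) = orbit_offset j + real k * cycle_shift j h + of_int m" by blast
  obtain m1 :: int where m1: "orbit_offset ((j + h * k) + h) = (\<Prod>i<h. slot_sign (kind (visit ((j + h * k) + i)))) * orbit_offset (j + h * k) + cycle_shift (j + h * k) h + of_int m1"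
    using orbit_offset_window by blast
  have "orbit_offset (j + h * Suc k) = orbit_offset ((j + h * k) + h)" by (simp add: algebra_simps)
  also have "\<dots> = orbit_offset (j + h * k) + cycle_shift j h + of_int m1" using m1 cycle_sign_product cycle_shift_period by simp
  also have "\<dots> = orbit_offset j + real (Suc k) * cycle_shift j h + of_int (m + m1)" using m by (simp add: algebra_simps)
  finally show ?case by blast
qed

lemma visits_dense:
  assumes y: "y < h" and b: "0 < \<beta>" "\<beta> < 1" and e: "0 < \<epsilon>"
  shows "\<exists>n. visit n = y \<and> \<bar>orbit_offset n - \<beta>\<bar> < \<epsilon>"
proof -
  have "y \<in> (\<lambda>i. (target ^^ i) 0) ` {..<h}" using visits_all y by (simp add: bij_betw_def)
  then obtain j where j: "j < h" "visit j = y" unfolding visit_def by auto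
  define \<epsilon>' where "\<epsilon>' = min \<epsilon> (min \<beta> (1 - \<beta>))"
  have e': "0 < \<epsilon>'" using e b by (simp add: \<epsilon>'_def)
  obtain hh kk :: int where hk: "0 < kk" "\<bar>of_int kk * cycle_shift j h - of_int hh - (\<beta> - orbit_offset j)\<bar> < \<epsilon>'"
    by (rule sequence_of_fractional_parts_is_dense[OF cycle_shift_irrational e'])
  define k where "k = nat kk"
  have kk: "real k = of_int kk" using hk(1) by (simp add: k_def)
  obtain m :: int where m: "orbit_offset (j + h * k) = orbit_offset j + real k * cycle_shift j h + of_int m" using orbit_offset_cycles by blast
  define v where "v = orbit_offset j + real k * cycle_shift j h - of_int hh"
  have v: "\<bar>v - \<beta>\<bar> < \<epsilon>'" using hk(2) kk by (simp add: v_def algebra_simps)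
  have v01: "0 < v" "v < 1" using v by (auto simp: \<epsilon>'_def abs_less_iff)
  have "orbit_offset (j + h * k) - v = of_int (m + hh)" using m by (simp add: v_def)
  moreover have "\<bar>orbit_offset (j + h * k) - v\<bar> < 1" using v01 orbit_offset_props[of "j + h * k"] by linarith
  ultimately have i: "of_int (m + hh) < (1::real)" "-1 < (of_int (m + hh) :: real)" by linarith+
  then have "m + hh < 1" "-1 < m + hh" by linarith+
  then have "m + hh = 0" by linarith
  then have "orbit_offset (j + h * k) = v" using \<open>orbit_offset (j + h * k) - v = of_int (m + hh)\<close> by simp
  then have "\<bar>orbit_offset (j + h * k) - \<beta>\<bar> < \<epsilon>" using v by (simp add: \<epsilon>'_def)
  moreover have "visit (j + h * k) = y" using visit_period_mult j by simp
  ultimately show ?thesis by blast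
qed

lemma slot_point_in_closure:
  assumes y: "y < h" and b: "0 < \<beta>" "\<beta> < 1"
  shows "circ ((real y + \<beta>) / h) \<in> closure (orbit T D base_point)"
  unfolding closure_approachable
proof (intro allI impI)
  fix \<epsilon> :: real assume e: "0 < \<epsilon>"
  obtain \<delta> where d: "0 < \<delta>" "\<And>x'. dist x' ((real y + \<beta>) / h) < \<delta> \<Longrightarrow> dist (circ x') (circ ((real y + \<beta>) / h)) < \<epsilon>"
    using isCont_circ[of "(real y + \<beta>) / h"] e unfolding continuous_at_eps_delta by blast
  have dh: "0 < \<delta> * h" using d h_pos by simp
  obtain n where n: "visit n = y" "\<bar>orbit_offset n - \<beta>\<bar> < \<delta> * h" using visits_dense[OF y b dh] by blast
  have "dist ((real y + orbit_offset n) / h) ((real y + \<beta>) / h) = \<bar>orbit_offset n - \<beta>\<bar> / h"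
    using h_pos by (simp add: dist_real_def diff_divide_distrib[symmetric])
  also have "\<dots> < \<delta>" using n(2) h_pos by (simp add: divide_less_eq)
  finally have "dist (circ ((real y + orbit_offset n) / h)) (circ ((real y + \<beta>) / h)) < \<epsilon>" using d(2) by blast
  moreover have "circ ((real y + orbit_offset n) / h) \<in> orbit T D base_point" using orbit_base_point_in_orbit[of n] orbit_base_point n(1) by simp
  ultimately show "\<exists>z\<in>orbit T D base_point. dist z (circ ((real y + \<beta>) / h)) < \<epsilon>" by blast
qed

lemma D_subset_S1: "D \<subseteq> S1"
  unfolding D_def by auto

lemma orbit_subset_S1: "orbit T D base_point \<subseteq> S1"
proof
  fix z assume "z \<in> orbit T D base_point"
  then consider (forward) k where "z = (T ^^ k) base_point"
    | (backward) k where "in_dom_iter T D k z" "(T ^^ k) z = base_point"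
    unfolding orbit_def by blast
  then show "z \<in> S1"
  proof cases
    case (forward k)
    then show ?thesis using orbit_in_D D_subset_S1 by auto
  next
    case (backward k)
    then show ?thesis
      using D_subset_S1 by (cases k) (auto simp: base_point_def in_dom_iter_def)
  qed
qed

lemma slot_in_orbit_closure:
  assumes y: "y < h"
  shows "circ ` {real y / h..(real y + 1) / h} \<subseteq> closure (orbit T D base_point)"
proof -
  have "circ ` {real y / h<..<(real y + 1) / h} \<subseteq> closure (orbit T D base_point)"
  proof
    fix z assume "z \<in> circ ` {real y / h<..<(real y + 1) / h}"
    then obtain t where t: "real y / h < t" "t < (real y + 1) / h" "z = circ t" by auto
    then have "0 < t * h - y" "t * h - y < 1" by (auto simp: divide_h_less_iff less_divide_h_iff)
    moreover have "t = (real y + (t * h - y)) / h" using h_neq_0 by simp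
    ultimately show "z \<in> closure (orbit T D base_point)"
      using slot_point_in_closure[OF y] t(3) by metis
  qed
  then have "closure (circ ` {real y / h<..<(real y + 1) / h}) \<subseteq> closure (orbit T D base_point)"
    by (rule closure_minimal) simp
  moreover have "real y / h < (real y + 1) / h" using h_pos by (simp add: divide_strict_right_mono)
  ultimately show ?thesis by (simp add: closure_circ_arc)
qed

theorem transitive_T: "transitive T D"
  unfolding transitive_def
proof
  show "closure (orbit T D base_point) = S1"
  proof
    show "closure (orbit T D base_point) \<subseteq> S1"
      using orbit_subset_S1 by (rule closure_minimal) (simp add: S1_def)
    show "S1 \<subseteq> closure (orbit T D base_point)"
    proof
      fix z assume "z \<in> S1"
      then obtain t where t: "0 \<le> t" "t < 1" "circ t = z" by (rule circ_surj)
      then have "t \<in> {real (slot t) / h..(real (slot t) + 1) / h}"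
        using slot_offset[of t] offset_range[of t] h_pos by (auto simp: field_simps)
      then show "z \<in> closure (orbit T D base_point)"
        using slot_in_orbit_closure[OF slot_lt[OF t(1,2)]] t(3) by blast
    qed
  qed
qed (simp add: base_point_def)

theorem CET_transitive_T:
  "CET ((\<Sum>x<h. pieces (kind x)) - (if merged then 1 else 0))
       ((\<Sum>x<h. if is_flip (kind x) then pieces (kind x) else 0) - (if merged then 1 else 0)) T D
   \<and> transitive T D"
  using CET_T transitive_T card_Arcs_where[of "\<lambda>_. True"] card_Arcs_where[of is_flip]
  by (simp add: arc_flip_def)

end

section \<open>Realising every number of flips\<close>

lemma ex_irrational_unit: "\<exists>\<theta>::real. \<theta> \<notin> \<rat> \<and> 0 < \<theta> \<and> \<theta> < 1"
proof -
  have "uncountable {0<..<(1::real)}" using uncountable_open_interval[of 0 "1::real"] by simp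
  then have "\<not> {0<..<(1::real)} \<subseteq> \<rat>" using countable_rat countable_subset by blast
  then show ?thesis by auto
qed

lemma cycle_permutation:
  fixes f :: "nat \<Rightarrow> nat"
  assumes orbit: "bij_betw (\<lambda>i. (f ^^ i) 0) {..<h} {..<h}" and closes: "(f ^^ h) 0 = 0"
  shows "\<And>x. x < h \<Longrightarrow> f x < h" and "inj_on f {..<h}"
proof -
  have step: "f ((f ^^ i) 0) = (f ^^ (Suc i mod h)) 0" if "i < h" for i
    using that closes by (cases "Suc i = h") auto
  have rep: "\<exists>i<h. x = (f ^^ i) 0" if "x < h" for x
    using orbit that by (auto simp: bij_betw_def image_iff)
  have orbit_inj: "i = j" if "i < h" "j < h" "(f ^^ i) 0 = (f ^^ j) 0" for i j
    using orbit that by (auto simp: bij_betw_def inj_on_def)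
  have orbit_lt: "(f ^^ i) 0 < h" if "i < h" for i
    using bij_betw_apply[OF orbit] that by simp
  show "f x < h" if x: "x < h" for x
  proof -
    obtain i where "i < h" "x = (f ^^ i) 0" using rep[OF x] by blast
    moreover have "Suc i mod h < h" using x by simp
    ultimately show ?thesis using step orbit_lt by simp
  qed
  show "inj_on f {..<h}"
  proof (rule inj_onI)
    fix x y assume "x \<in> {..<h}" "y \<in> {..<h}" and eq: "f x = f y"
    then obtain i j where ij: "i < h" "j < h" "x = (f ^^ i) 0" "y = (f ^^ j) 0"
      using rep[of x] rep[of y] by auto
    then have "(f ^^ (Suc i mod h)) 0 = (f ^^ (Suc j mod h)) 0" using step eq by simp
    moreover have "Suc i mod h < h" "Suc j mod h < h" using ij by simp_all
    ultimately have "Suc i mod h = Suc j mod h" using orbit_inj by blast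
    then have "i = j" using mod_add_left_inj[of i h j 1] ij(1,2) by simp
    then show "x = y" using ij by simp
  qed
qed

text \<open>The number of flipped arcs is the number of pieces of the flipping slots; merging the
  reversed slots 1 and 2 into a single arc saves one arc.\<close>
lemma CET_of_slot_list:
  fixes L :: "slot_kind list" and target :: "nat \<Rightarrow> nat" and c0 :: nat
  defines "h \<equiv> length L"
  assumes "3 \<le> h"
    and cycle: "bij_betw (\<lambda>i. (target ^^ i) 0) {..<h} {..<h}" "(target ^^ h) 0 = 0"
    and "c0 < h" "L ! c0 = Rotate \<or> L ! c0 = Reflect"
    and "even (length (filter is_flip L))"
    and "merged \<Longrightarrow> L ! 1 = Reverse \<and> L ! 2 = Reverse \<and> target 1 = (target 2 + 1) mod h"
    and "\<And>y. y < h \<Longrightarrow> \<not> (merged \<and> y = 2) \<Longrightarrow>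
      jump_at h (L ! ((y + h - 1) mod h)) (L ! y) (target ((y + h - 1) mod h)) (target y)"
  shows "\<exists>T D. CET (sum_list (map pieces L) - (if merged then 1 else 0))
                  (sum_list (map pieces (filter is_flip L)) - (if merged then 1 else 0)) T D
              \<and> transitive T D"
proof -
  obtain \<theta> :: real where \<theta>: "\<theta> \<notin> \<rat>" "0 < \<theta>" "\<theta> < 1" using ex_irrational_unit by blast
  define cut where "cut x = (if x = c0 then \<theta> else 1/2)" for x :: nat
  have "card {x. x < h \<and> is_flip (L ! x)} = length (filter is_flip L)"
    using length_filter_conv_card[of is_flip L] by (simp add: h_def)
  then interpret slot_dynamics h "\<lambda>x. L ! x" cut target merged \<theta> c0
    using assms cycle_permutation[OF cycle] \<theta> by unfold_locales (auto simp: cut_def)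
  have "sum_list (map pieces L) = (\<Sum>x<h. pieces (L ! x))"
    by (simp add: sum_list_sum_nth atLeast0LessThan h_def)
  moreover have "sum_list (map pieces (filter is_flip L))
      = (\<Sum>x<h. if is_flip (L ! x) then pieces (L ! x) else 0)"
    unfolding sum_list_map_filter' by (simp add: sum_list_sum_nth atLeast0LessThan h_def)
  ultimately show ?thesis using CET_transitive_T by metis
qed

lemma CET_family_unmerged:
  fixes r a c b :: nat
  assumes "3 \<le> r + a + c + b" "1 \<le> r + a" "b \<le> 1" "even (r + c)"
  shows "\<exists>T D. CET (2 * r + 2 * a + c + b) (2 * r + c) T D \<and> transitive T D"
proof -
  define L where "L = replicate r Reflect @ replicate a Rotate @ replicate c Reverse @ replicate b Shift"
  define h where "h = length L"
  have h: "h = r + a + c + b" "3 \<le> h" using assms(1) by (simp_all add: L_def h_def)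
  have L_nth: "L ! x = (if x < r then Reflect else if x < r + a then Rotate
      else if x < r + a + c then Reverse else Shift)" if "x < h" for x
    using that unfolding L_def h by (auto simp: nth_append)
  define target where "target x = Suc x mod h" for x
  have orbit: "(target ^^ i) 0 = i mod h" for i
    by (induction i) (simp_all add: target_def mod_Suc_eq)
  have "bij_betw (\<lambda>i. (target ^^ i) 0) {..<h} {..<h}"
    unfolding orbit by (simp add: bij_betw_def inj_on_def)
  moreover have "(target ^^ h) 0 = 0" by (simp add: orbit)
  moreover have "jump_at h (L ! ((y + h - 1) mod h)) (L ! y) (target ((y + h - 1) mod h)) (target y)"
    if y: "y < h" for y
  proof -
    define p where "p = (y + h - 1) mod h"
    have p: "p < h" "p \<noteq> y" "target p = y"
      using mod_pred_eq[OF y] y h(2) by (auto simp: p_def target_def)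
    have "x = r + a + c" if "x < h" "L ! x = Shift" for x
      using that L_nth[OF that(1)] h(1) assms(3) by (auto split: if_splits)
    then have "\<not> (L ! p = Shift \<and> L ! y = Shift)" using p y by metis
    moreover have "(y + 2) mod h \<noteq> (y + 0) mod h"
      using mod_add_left_inj[of 2 h 0 y] h(2) by auto
    then have "y \<noteq> (target y + 1) mod h" using y by (simp add: target_def mod_Suc_eq)
    ultimately show ?thesis unfolding jump_at_def p_def[symmetric] using p by auto
  qed
  moreover have "0 < h" using h(2) by simp
  then have "L ! 0 = Rotate \<or> L ! 0 = Reflect" using L_nth[of 0] assms(2) by auto
  moreover have "even (length (filter is_flip L))" using assms(4) by (simp add: L_def)
  ultimately have "\<exists>T D. CET (sum_list (map pieces L)) (sum_list (map pieces (filter is_flip L))) T D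
      \<and> transitive T D"
    using CET_of_slot_list[of L target 0 False, folded h_def] h(2) by simp
  then show ?thesis by (simp add: L_def sum_list_replicate algebra_simps)
qed

text \<open>The cyclic order \<open>0, 2, 3, 1, 4, 5, \<dots>, h - 1\<close> of the slots.\<close>
definition merged_cycle :: "nat \<Rightarrow> nat \<Rightarrow> nat" where
  "merged_cycle h x = (if x = 0 then 2 else if x = 1 then (if h = 4 then 0 else 4)
     else if x = 2 then 3 else if x = 3 then 1 else Suc x mod h)"

lemma merged_cycle_orbit:
  assumes "4 \<le> h"
  shows "bij_betw (\<lambda>i. (merged_cycle h ^^ i) 0) {..<h} {..<h}" "(merged_cycle h ^^ h) 0 = 0"
proof -
  define q where "q i = (if i = 0 \<or> i = h then 0 else if i = 1 then 2 else if i = 2 then 3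
                      else if i = 3 then (1::nat) else i)" for i
  have orbit: "(merged_cycle h ^^ i) 0 = q i" if "i \<le> h" for i
    using that
  proof (induction i)
    case (Suc i)
    then have "(merged_cycle h ^^ Suc i) 0 = merged_cycle h (q i)" by simp
    also have "\<dots> = q (Suc i)"
      using Suc.prems assms by (cases "i \<le> 3") (auto simp: q_def merged_cycle_def)
    finally show ?case .
  qed (simp add: q_def)
  have "inj_on q {..<h}" unfolding inj_on_def q_def by auto
  moreover have "q ` {..<h} \<subseteq> {..<h}" using assms by (auto simp: q_def)
  ultimately have "bij_betw q {..<h} {..<h}" by (simp add: bij_betw_def endo_inj_surj)
  then show "bij_betw (\<lambda>i. (merged_cycle h ^^ i) 0) {..<h} {..<h}"
    by (rule bij_betw_cong[THEN iffD1, rotated]) (simp add: orbit)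
  show "(merged_cycle h ^^ h) 0 = 0" using orbit[of h] by (simp add: q_def)
qed

text \<open>Slots 1 and 2 are reversed onto consecutive target slots in reverse order, so together they
  form one flipped arc.\<close>
lemma CET_family_merged:
  fixes s0 s3 :: slot_kind and m :: nat
  assumes kinds: "(s0 = Rotate \<and> (s3 = Shift \<or> s3 = Rotate)) \<or> (s0 = Reverse \<and> s3 = Reflect \<and> m = 0)"
  shows "\<exists>T D. CET (pieces s0 + pieces s3 + 2 * m + 1)
      ((if is_flip s0 then pieces s0 else 0) + (if is_flip s3 then pieces s3 else 0) + 1) T D
    \<and> transitive T D"
proof -
  define L where "L = [s0, Reverse, Reverse, s3] @ replicate m Rotate"
  define h where "h = length L"
  have h: "h = 4 + m" "4 \<le> h" by (simp_all add: L_def h_def)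
  have L_nth: "L ! x = (if x = 0 then s0 else if x \<le> 2 then Reverse else if x = 3 then s3 else Rotate)"
    if "x < h" for x
  proof -
    consider "x = 0" | "x = 1" | "x = 2" | "x = 3" | "4 \<le> x" by linarith
    then show ?thesis
      by cases (use that in \<open>simp_all add: L_def h nth_append\<close>)
  qed
  define target where "target = merged_cycle h"
  note cycle = merged_cycle_orbit[OF h(2), folded target_def]
  moreover have "jump_at h (L ! ((y + h - 1) mod h)) (L ! y) (target ((y + h - 1) mod h)) (target y)"
    if y: "y < h" "y \<noteq> 2" for y
  proof -
    define p where "p = (y + h - 1) mod h"
    have p: "p = (if y = 0 then h - 1 else y - 1)" "p < h"
      using mod_pred_eq[OF y(1)] y(1) unfolding p_def by auto
    have target01: "target 0 \<noteq> (target 1 + 1) mod h"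
      using h(2) by (cases "h = 5") (auto simp: target_def merged_cycle_def)
    consider "y = 0" | "y = 1" | "y = 3" | "4 \<le> y" using y by linarith
    then have "jump_at h (L ! p) (L ! y) (target p) (target y)"
    proof cases
      case 1
      then show ?thesis using L_nth[OF p(2)] L_nth[OF y(1)] kinds p(1) h(2) by (auto simp: jump_at_def)
    next
      case 2
      then show ?thesis using L_nth[OF y(1)] p(1) target01 kinds
        by (auto simp: jump_at_def)
    next
      case 3
      then show ?thesis using L_nth[OF p(2)] L_nth[OF y(1)] kinds p(1) by (auto simp: jump_at_def)
    next
      case 4
      then show ?thesis using L_nth[OF y(1)] by (simp add: jump_at_def)
    qed
    then show ?thesis by (simp add: p_def)
  qed
  moreover have "L ! (if s0 = Rotate then 0 else 3) = Rotate \<or> L ! (if s0 = Rotate then 0 else 3) = Reflect"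
    using kinds by (auto simp: L_def)
  moreover have "target 1 = (target 2 + 1) mod h" using h(2) by (auto simp: target_def merged_cycle_def)
  ultimately have "\<exists>T D. CET (sum_list (map pieces L) - 1) (sum_list (map pieces (filter is_flip L)) - 1) T D
      \<and> transitive T D"
    using CET_of_slot_list[of L target "if s0 = Rotate then 0 else 3" True] cycle h kinds unfolding h_def
    by (auto simp: L_def)
  moreover have "sum_list (map pieces L) - 1 = pieces s0 + pieces s3 + 2 * m + 1"
    by (simp add: L_def sum_list_replicate)
  moreover have "sum_list (map pieces (filter is_flip L)) - 1
      = (if is_flip s0 then pieces s0 else 0) + (if is_flip s3 then pieces s3 else 0) + 1"
    by (simp add: L_def)
  ultimately show ?thesis by simp
qed

lemma flip_count_parameters:
  fixes n f :: nat
  assumes "4 \<le> n" "2 \<le> f" "f \<le> n" "\<not> (n = 4 \<and> f = 4)"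
  obtains r a c b where "3 \<le> r + a + c + b" "1 \<le> r + a" "b \<le> 1" "even (r + c)"
    "n = 2 * r + 2 * a + c + b" "f = 2 * r + c"
proof -
  have "\<exists>r c. f = 2 * r + c \<and> even (r + c) \<and> c \<le> 3" using assms(2) by presburger
  then obtain r c where rc: "f = 2 * r + c" "even (r + c)" "c \<le> 3" by blast
  define a b where "a = (n - f) div 2" and "b = (n - f) mod 2"
  have ab: "n = f + 2 * a + b" "b \<le> 1" using assms(3) by (simp_all add: a_def b_def)
  have "1 \<le> r + a"
  proof (cases "r = 0")
    case True
    then have "c \<noteq> 3" using rc(2) by auto
    then show ?thesis using True rc(1,3) ab assms(1,2) by linarith
  qed simp
  moreover have "3 \<le> r + a + c + b"
  proof (rule ccontr)
    assume "\<not> 3 \<le> r + a + c + b"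
    then have "c = 0" "n = 4" "r \<le> 2" using rc(1) ab assms(1) by linarith+
    then consider "r = 0" | "r = 1" | "r = 2" by linarith
    then show False using rc(1,2) \<open>c = 0\<close> \<open>n = 4\<close> assms(2,4) by cases simp_all
  qed
  ultimately show ?thesis using that rc ab by simp
qed

theorem theorem9p1:
  fixes n f :: nat
  assumes "4 \<le> n" and "1 \<le> f" and "f \<le> n"
  shows "\<exists>T D. CET n f T D \<and> transitive T D"
proof -
  consider "f = 1" | "n = 4" "f = 4" | "2 \<le> f" "\<not> (n = 4 \<and> f = 4)" using assms(2) by linarith
  then show ?thesis
  proof cases
    case 1
    have "\<exists>m. n = 4 + 2 * m \<or> n = 5 + 2 * m" using assms(1) by presburger
    then show ?thesis
      using CET_family_merged[of Rotate Shift] CET_family_merged[of Rotate Rotate] 1 by auto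
  next
    case 2
    then show ?thesis using CET_family_merged[of Reverse Reflect 0] by (simp add: eval_nat_numeral)
  next
    case 3
    then obtain r a c b where "3 \<le> r + a + c + b" "1 \<le> r + a" "b \<le> 1" "even (r + c)"
        and "n = 2 * r + 2 * a + c + b" "f = 2 * r + c"
      using flip_count_parameters assms(1,3) by blast
    then show ?thesis using CET_family_unmerged by blast
  qed
qed

end
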